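(* The problem "given a CFSM protocol $\mathbf P$, an edge $\beta$, a message $b\in M_\beta$ and a state $p\in K_i$ with $i=+\beta$, can $b$ arrive at $p$?" is algorithmically decidable for CFSM protocols with the recognizable channel property.
   Context: A CFSM protocol $\mathbf P$ has a finite directed communication graph $G=(N,E)$ (edge $\xi$ has tail $-\xi$, head $+\xi$), pairwise disjoint finite message sets $M_\xi$, and for each $j\in N$ a finite state machine $F_j=(K_j,\Sigma_j,T_j,h_j)$: finite state set $K_j$, initial state $h_j$, alphabet $\Sigma_j=\{+b: b\in M_\xi,\ j=+\xi\}\cup\{-b: b\in M_\xi,\ j=-\xi\}$, transitions $T_j\subseteq K_j\times\Sigma_j\times K_j$ ($+b$ = receive, $-b$ = send). A composite state is $S=(p_j:j\in N)$; a channel content is $C=(x_\xi:\xi\in E)$, $x_\xi\in M_\xi^*$; global states are pairs $(S,C)$; $C^0$ has all components empty; the initial global state is $((h_j:j\in N),C^0)$. A step: some machine $F_i$ takes $p_i\xrightarrow{-b}q_i$ with $b\in M_\beta$, $i=-\beta$, appending $b$ to the end of $x_\beta$; or takes $p_i\xrightarrow{+b}q_i$ with $b\in M_\beta$, $i=+\beta$, provided $x_\beta$ begins with $b$, removing it; all else unchanged. Reachable means reachable from the initial global state by finitely many steps. The message $b\in M_\beta$ can arrive at $p\in K_i$ (where $i=+\beta$) if there is a reachable global state $((p_j:j\in N),(x_\xi:\xi\in E))$ with $p_i=p$ and $x_\beta$ beginning with $b$. $\mathbf P$ has the recognizable channel property if for every composite state $S$ the set $\{C:(S,C)\text{ reachable}\}$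 is a finite union of sets $\prod_{\xi\in E}L_\xi$ with each $L_\xi\subseteq M_\xi^*$ regular. *)

theory Defs
  imports Main "HOL-Library.Nat_Bijection"
begin

datatype recf =
    RZero
  | RSucc
  | RProj nat
  | RComp recf "recf list"
  | RPrec recf recf
  | RMin recf

inductive eval_recf :: "recf \<Rightarrow> nat list \<Rightarrow> nat \<Rightarrow> bool" where
  zero: "eval_recf RZero xs 0"
| succ: "eval_recf RSucc (x # xs) (Suc x)"
| proj: "i < length xs \<Longrightarrow> eval_recf (RProj i) xs (xs ! i)"
| comp: "length zs = length gs \<Longrightarrow> (\<forall>k<length gs. eval_recf (gs ! k) xs (zs ! k))
          \<Longrightarrow> eval_recf f zs y \<Longrightarrow> eval_recf (RComp f gs) xs y"
| prec0: "eval_recf f xs y \<Longrightarrow> eval_recf (RPrec f g) (0 # xs) y"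
| precS: "eval_recf (RPrec f g) (n # xs) r \<Longrightarrow> eval_recf g (n # r # xs) y
          \<Longrightarrow> eval_recf (RPrec f g) (Suc n # xs) y"
| mini: "eval_recf f (n # xs) 0 \<Longrightarrow> (\<forall>m<n. \<exists>k. eval_recf f (m # xs) (Suc k))
          \<Longrightarrow> eval_recf (RMin f) xs n"

definition decidable_on :: "(nat \<Rightarrow> bool) \<Rightarrow> (nat \<Rightarrow> bool) \<Rightarrow> bool" where
  "decidable_on Promise Q \<longleftrightarrow>
     (\<exists>f. \<forall>n. Promise n \<longrightarrow> eval_recf f [n] (if Q n then 1 else 0))"

datatype rexp = ZeroR | OneR | AtomR nat | PlusR rexp rexp | TimesR rexp rexp | StarR rexp

inductive_set star_lang :: "nat list set \<Rightarrow> nat list set" for L where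
  star_nil: "[] \<in> star_lang L"
| star_app: "u \<in> L \<Longrightarrow> v \<in> star_lang L \<Longrightarrow> u @ v \<in> star_lang L"

fun lang :: "rexp \<Rightarrow> nat list set" where
  "lang ZeroR = {}"
| "lang OneR = {[]}"
| "lang (AtomR a) = {[a]}"
| "lang (PlusR r s) = lang r \<union> lang s"
| "lang (TimesR r s) = {u @ v | u v. u \<in> lang r \<and> v \<in> lang s}"
| "lang (StarR r) = star_lang (lang r)"

definition regular :: "nat list set \<Rightarrow> bool" where
  "regular L \<longleftrightarrow> (\<exists>r. lang r = L)"

text \<open>An edge is (tail, head, message set M_xi as a list).  Edges are numbered 0..<|E|
  by their position in the edge list; nodes are 0..<|N| (position in the machine list).
  A transition (p, s, b, q) is p --(-b)--> q (send) if s = True and p --(+b)--> q (receive)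
  if s = False.  A machine is (state set K_j as a list, initial state h_j, transitions T_j).\<close>

type_synonym edge = "nat \<times> nat \<times> nat list"
type_synonym trans = "nat \<times> bool \<times> nat \<times> nat"
type_synonym machine = "nat list \<times> nat \<times> trans list"
type_synonym protocol = "edge list \<times> machine list"
type_synonym gstate = "nat list \<times> nat list list"

definition edges :: "protocol \<Rightarrow> edge list" where "edges P = fst P"
definition machines :: "protocol \<Rightarrow> machine list" where "machines P = snd P"
definition tl_e :: "protocol \<Rightarrow> nat \<Rightarrow> nat" where "tl_e P \<xi> = fst (edges P ! \<xi>)"
definition hd_e :: "protocol \<Rightarrow> nat \<Rightarrow> nat" where "hd_e P \<xi> = fst (snd (edges P ! \<xi>))"
definition msgs :: "protocol \<Rightarrow> nat \<Rightarrow> nat set" where "msgs P \<xi> = set (snd (snd (edges P ! \<xi>)))"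
definition states :: "protocol \<Rightarrow> nat \<Rightarrow> nat set" where "states P j = set (fst (machines P ! j))"
definition init :: "protocol \<Rightarrow> nat \<Rightarrow> nat" where "init P j = fst (snd (machines P ! j))"
definition trans :: "protocol \<Rightarrow> nat \<Rightarrow> trans set" where "trans P j = set (snd (snd (machines P ! j)))"

definition wf_protocol :: "protocol \<Rightarrow> bool" where
  "wf_protocol P \<longleftrightarrow>
     (\<forall>\<xi><length (edges P). tl_e P \<xi> < length (machines P) \<and> hd_e P \<xi> < length (machines P)) \<and>
     (\<forall>\<xi>1<length (edges P). \<forall>\<xi>2<length (edges P). \<xi>1 \<noteq> \<xi>2 \<longrightarrow> msgs P \<xi>1 \<inter> msgs P \<xi>2 = {}) \<and>
     (\<forall>j<length (machines P). init P j \<in> states P j \<and>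
        (\<forall>p s b q. (p, s, b, q) \<in> trans P j \<longrightarrow>
           p \<in> states P j \<and> q \<in> states P j \<and>
           (\<exists>\<xi><length (edges P). b \<in> msgs P \<xi> \<and> (if s then tl_e P \<xi> = j else hd_e P \<xi> = j))))"

text \<open>Global states (S, C): S = composite state (one local state per node),
  C = channel contents (one word per edge).\<close>
inductive step :: "protocol \<Rightarrow> gstate \<Rightarrow> gstate \<Rightarrow> bool" for P where
  send: "i < length (machines P) \<Longrightarrow> \<beta> < length (edges P) \<Longrightarrow> b \<in> msgs P \<beta> \<Longrightarrow>
         tl_e P \<beta> = i \<Longrightarrow> (S ! i, True, b, q) \<in> trans P i \<Longrightarrow>
         step P (S, C) (S[i := q], C[\<beta> := C ! \<beta> @ [b]])"
| recv: "i < length (machines P) \<Longrightarrow> \<beta> < length (edges P) \<Longrightarrow> b \<in> msgs P \<beta> \<Longrightarrow>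
         hd_e P \<beta> = i \<Longrightarrow> (S ! i, False, b, q) \<in> trans P i \<Longrightarrow> C ! \<beta> = b # w \<Longrightarrow>
         step P (S, C) (S[i := q], C[\<beta> := w])"

definition initial_gstate :: "protocol \<Rightarrow> gstate" where
  "initial_gstate P = (map (\<lambda>j. init P j) [0..<length (machines P)], replicate (length (edges P)) [])"

definition reachable :: "protocol \<Rightarrow> gstate \<Rightarrow> bool" where
  "reachable P G \<longleftrightarrow> (step P)\<^sup>*\<^sup>* (initial_gstate P) G"

definition can_arrive :: "protocol \<Rightarrow> nat \<Rightarrow> nat \<Rightarrow> nat \<Rightarrow> bool" where
  "can_arrive P \<beta> b p \<longleftrightarrow>
     (\<exists>S C w. reachable P (S, C) \<and> S ! hd_e P \<beta> = p \<and> C ! \<beta> = b # w)"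

definition recognizable_channel_property :: "protocol \<Rightarrow> bool" where
  "recognizable_channel_property P \<longleftrightarrow>
     (\<forall>S. \<exists>F :: nat list set list list.
        (\<forall>Ls \<in> set F. length Ls = length (edges P) \<and>
           (\<forall>\<xi><length (edges P). regular (Ls ! \<xi>) \<and> Ls ! \<xi> \<subseteq> lists (msgs P \<xi>))) \<and>
        {C. reachable P (S, C)} =
          (\<Union>Ls \<in> set F. {C. length C = length (edges P) \<and> (\<forall>\<xi><length (edges P). C ! \<xi> \<in> Ls ! \<xi>)}))"

definition enc_edge :: "edge \<Rightarrow> nat" where
  "enc_edge e = (case e of (t, h, ms) \<Rightarrow> list_encode [t, h, list_encode ms])"
definition enc_trans :: "trans \<Rightarrow> nat" where
  "enc_trans tr = (case tr of (p, s, b, q) \<Rightarrow> list_encode [p, if s then 1 else 0, b, q])"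
definition enc_machine :: "machine \<Rightarrow> nat" where
  "enc_machine m = (case m of (ks, h, ts) \<Rightarrow>
      list_encode [list_encode ks, h, list_encode (map enc_trans ts)])"
definition enc_protocol :: "protocol \<Rightarrow> nat" where
  "enc_protocol P = list_encode [list_encode (map enc_edge (edges P)),
                                 list_encode (map enc_machine (machines P))]"
definition enc_instance :: "protocol \<Rightarrow> nat \<Rightarrow> nat \<Rightarrow> nat \<Rightarrow> nat" where
  "enc_instance P \<beta> b p = list_encode [enc_protocol P, \<beta>, b, p]"

definition valid_instance :: "protocol \<Rightarrow> nat \<Rightarrow> nat \<Rightarrow> nat \<Rightarrow> bool" where
  "valid_instance P \<beta> b p \<longleftrightarrow> wf_protocol P \<and> \<beta> < length (edges P) \<and>
      b \<in> msgs P \<beta> \<and> p \<in> states P (hd_e P \<beta>)"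

end

theory Submission
  imports Defs "HOL-Library.More_List" "HOL-Library.FuncSet"
begin

(* Both answers have finite certificates that a primitive recursive predicate can check, so
   searching for the least certificate of either kind decides the problem.  An arrival is
   witnessed by a run of the protocol.  A non-arrival is witnessed by a finite abstraction: by
   the recognizable channel property, finitely many regular languages describe the reachable
   channel contents of all composite states, and reachability is invariant under replacing a
   channel content by a word with the same image in their (finite) syntactic monoid.  The set
   of reachable global states with channels replaced by their monoid images is therefore a finite
   set that contains the initial state, is closed under the abstract transitions and contains no
   state at which b can arrive at p; conversely every such set excludes arrival. *)

section \<open>Primitive recursive functions\<close>

(* Arg reads 0 beyond the end of
   the list, so expressions have no fixed arity; in Prec a z s the step s sees the counter and the
   previous value in front of the arguments. *)
datatype prim_expr = Arg nat | Const nat | Succ prim_expr | Prec prim_expr prim_expr prim_expr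

primrec peval :: "prim_expr \<Rightarrow> nat list \<Rightarrow> nat" where
  "peval (Arg i) xs = nth_default 0 xs i"
| "peval (Const c) xs = c"
| "peval (Succ e) xs = Suc (peval e xs)"
| "peval (Prec a z s) xs = rec_nat (peval z xs) (\<lambda>i r. peval s (i # r # xs)) (peval a xs)"

fun shift :: "nat \<Rightarrow> nat \<Rightarrow> prim_expr \<Rightarrow> prim_expr" where
  "shift c d (Arg i) = Arg (if i < c then i else i + d)"
| "shift c d (Const n) = Const n"
| "shift c d (Succ e) = Succ (shift c d e)"
| "shift c d (Prec a z s) = Prec (shift c d a) (shift c d z) (shift (c + 2) d s)"

lemma peval_shift: "peval (shift c d e) xs = peval e (take c xs @ drop (c + d) xs)"
proof (induction e arbitrary: c xs)
  case (Arg i)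
  then show ?case by (auto simp: nth_default_def nth_append min_def add.commute)
next
  case (Prec a z s)
  then show ?case by (simp add: add.commute)
qed simp_all

lemma eval_recf_iterated_succ: "eval_recf (((\<lambda>f. RComp RSucc [f]) ^^ c) RZero) xs c"
proof (induction c)
  case 0
  then show ?case by (simp add: eval_recf.zero)
next
  case (Suc c)
  then show ?case by (auto intro: eval_recf.comp[where zs = "[c]"] eval_recf.succ)
qed

lemma peval_recursive: "\<exists>f. \<forall>xs. length xs = k \<longrightarrow> eval_recf f xs (peval e xs)"
proof (induction e arbitrary: k)
  case (Arg i)
  show ?case
  proof (cases "i < k")
    case True
    then show ?thesis by (auto simp: nth_default_def intro!: exI[of _ "RProj i"] eval_recf.proj)
  next
    case False
    then show ?thesis by (auto simp: nth_default_def intro!: exI[of _ RZero] eval_recf.zero)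
  qed
next
  case (Const c)
  show ?case
    using eval_recf_iterated_succ by (auto intro!: exI[of _ "((\<lambda>f. RComp RSucc [f]) ^^ c) RZero"])
next
  case (Succ e)
  then obtain f where "\<forall>xs. length xs = k \<longrightarrow> eval_recf f xs (peval e xs)" by blast
  then show ?case
    by (auto intro!: exI[of _ "RComp RSucc [f]"] eval_recf.comp[where zs = "[peval e _]"] eval_recf.succ)
next
  case (Prec a z s)
  obtain fa where fa: "\<forall>xs. length xs = k \<longrightarrow> eval_recf fa xs (peval a xs)" using Prec.IH(1) by blast
  obtain fz where fz: "\<forall>xs. length xs = k \<longrightarrow> eval_recf fz xs (peval z xs)" using Prec.IH(2) by blast
  obtain fs where fs: "\<forall>xs. length xs = Suc (Suc k) \<longrightarrow> eval_recf fs xs (peval s xs)"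
    using Prec.IH(3) by blast
  have rec: "eval_recf (RPrec fz fs) (n # xs) (rec_nat (peval z xs) (\<lambda>i r. peval s (i # r # xs)) n)"
    if "length xs = k" for n xs
    using that fz fs by (induction n) (auto intro: eval_recf.prec0 eval_recf.precS)
  have "eval_recf (RComp (RPrec fz fs) (fa # map RProj [0..<k])) xs (peval (Prec a z s) xs)"
    if "length xs = k" for xs
    using that fa rec by (intro eval_recf.comp[where zs = "peval a xs # xs"])
      (auto simp: nth_Cons' intro: eval_recf.proj)
  then show ?case by blast
qed

definition prim_rec :: "(nat list \<Rightarrow> nat) \<Rightarrow> bool" where
  "prim_rec f \<longleftrightarrow> (\<exists>e. peval e = f)"

definition prim_rec_pred :: "(nat list \<Rightarrow> bool) \<Rightarrow> bool" where
  "prim_rec_pred P \<longleftrightarrow> prim_rec (\<lambda>xs. of_bool (P xs))"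

named_theorems prim_rec_intros

lemma prim_rec_const [prim_rec_intros]: "prim_rec (\<lambda>xs. c)"
  unfolding prim_rec_def by (auto intro!: exI[of _ "Const c"])

lemma prim_rec_arg [prim_rec_intros]: "prim_rec (\<lambda>xs. nth_default 0 xs i)"
  unfolding prim_rec_def by (auto intro!: exI[of _ "Arg i"])

lemma prim_rec_Suc [prim_rec_intros]: "prim_rec f \<Longrightarrow> prim_rec (\<lambda>xs. Suc (f xs))"
  unfolding prim_rec_def by (metis peval.simps(3))

lemma prim_rec_rec_nat:
  assumes "prim_rec a" "prim_rec z"
    and "prim_rec (\<lambda>ys. s (nth_default 0 ys 0) (nth_default 0 ys 1) (drop 2 ys))"
  shows "prim_rec (\<lambda>xs. rec_nat (z xs) (\<lambda>i r. s i r xs) (a xs))"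
proof -
  obtain ea ez es where "peval ea = a" "peval ez = z"
    "peval es = (\<lambda>ys. s (nth_default 0 ys 0) (nth_default 0 ys 1) (drop 2 ys))"
    using assms unfolding prim_rec_def by blast
  then have "peval (Prec ea ez es) = (\<lambda>xs. rec_nat (z xs) (\<lambda>i r. s i r xs) (a xs))"
    by (auto simp: fun_eq_iff)
  then show ?thesis unfolding prim_rec_def by blast
qed

lemma prim_rec_delete_args:
  "prim_rec f \<Longrightarrow> prim_rec (\<lambda>xs. f (take c xs @ drop (c + d) xs))"
  unfolding prim_rec_def by (metis peval_shift)

lemma prim_rec_drop: "prim_rec f \<Longrightarrow> prim_rec (\<lambda>xs. f (drop d xs))"
  using prim_rec_delete_args[of f 0 d] by simp

(* Inside a bounded quantifier the outer arguments sit behind the bound variable; this rule lets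
   prim_rec_intros reach them. *)
lemma prim_rec_arg_tl [prim_rec_intros]:
  "prim_rec (\<lambda>xs. nth_default 0 (g xs) (Suc i)) \<Longrightarrow> prim_rec (\<lambda>xs. nth_default 0 (tl (g xs)) i)"
proof -
  have "nth_default 0 (tl ys) i = nth_default 0 ys (Suc i)" for ys :: "nat list"
    by (cases ys) auto
  then show "prim_rec (\<lambda>xs. nth_default 0 (g xs) (Suc i)) \<Longrightarrow> ?thesis" by simp
qed

lemma prim_rec_add [prim_rec_intros]: "prim_rec f \<Longrightarrow> prim_rec g \<Longrightarrow> prim_rec (\<lambda>xs. f xs + g xs)"
proof -
  have "rec_nat m (\<lambda>i r. Suc r) n = n + m" for m n :: nat by (induction n) auto
  moreover assume "prim_rec f" "prim_rec g"
  then have "prim_rec (\<lambda>xs. rec_nat (g xs) (\<lambda>i r. Suc r) (f xs))"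
    by (intro prim_rec_rec_nat prim_rec_intros)
  ultimately show ?thesis by simp
qed

lemma prim_rec_minus_one: "prim_rec f \<Longrightarrow> prim_rec (\<lambda>xs. f xs - 1)"
proof -
  have "rec_nat 0 (\<lambda>i r. i) n = n - 1" for n :: nat by (cases n) auto
  moreover assume "prim_rec f"
  then have "prim_rec (\<lambda>xs. rec_nat 0 (\<lambda>i r. i) (f xs))"
    by (intro prim_rec_rec_nat prim_rec_intros)
  ultimately show ?thesis by simp
qed

lemma prim_rec_diff [prim_rec_intros]: "prim_rec f \<Longrightarrow> prim_rec g \<Longrightarrow> prim_rec (\<lambda>xs. f xs - g xs)"
proof -
  have "rec_nat m (\<lambda>i r. r - 1) n = m - n" for m n :: nat by (induction n) auto
  moreover assume "prim_rec f" "prim_rec g"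
  then have "prim_rec (\<lambda>xs. rec_nat (f xs) (\<lambda>i r. r - 1) (g xs))"
    by (intro prim_rec_rec_nat prim_rec_minus_one prim_rec_intros)
  ultimately show ?thesis by simp
qed

lemma prim_rec_if_zero:
  assumes "prim_rec c" "prim_rec f" "prim_rec g"
  shows "prim_rec (\<lambda>xs. if c xs = 0 then f xs else g xs)"
proof -
  have "rec_nat m (\<lambda>i r. k) n = (if n = 0 then m else k)" for m n k :: nat by (cases n) auto
  moreover have "prim_rec (\<lambda>xs. rec_nat (f xs) (\<lambda>i r. g xs) (c xs))"
    using assms by (intro prim_rec_rec_nat prim_rec_drop)
  ultimately show ?thesis by simp
qed

lemma prim_rec_If [prim_rec_intros]:
  assumes "prim_rec_pred P" "prim_rec f" "prim_rec g"
  shows "prim_rec (\<lambda>xs. if P xs then f xs else g xs)"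
proof -
  have eq: "(\<lambda>xs. if P xs then f xs else g xs) = (\<lambda>xs. if of_bool (P xs) = (0::nat) then g xs else f xs)"
    by auto
  show ?thesis
    unfolding eq using assms(1)[unfolded prim_rec_pred_def] assms(3) assms(2) by (rule prim_rec_if_zero)
qed

lemma prim_rec_pred_less [prim_rec_intros]:
  assumes "prim_rec f" "prim_rec g"
  shows "prim_rec_pred (\<lambda>xs. f xs < g xs)"
proof -
  have eq: "(\<lambda>xs. of_bool (f xs < g xs)) = (\<lambda>xs. if g xs - f xs = 0 then 0 else 1 :: nat)"
    by auto
  show ?thesis using assms unfolding eq prim_rec_pred_def by (intro prim_rec_if_zero prim_rec_intros)
qed

lemma prim_rec_pred_not [prim_rec_intros]: "prim_rec_pred P \<Longrightarrow> prim_rec_pred (\<lambda>xs. \<not> P xs)"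
proof -
  have eq: "(\<lambda>xs. of_bool (\<not> P xs)) = (\<lambda>xs. if P xs then 0 else 1 :: nat)" by auto
  show "prim_rec_pred P \<Longrightarrow> ?thesis" unfolding prim_rec_pred_def[of "\<lambda>xs. \<not> P xs"] eq
    by (intro prim_rec_If prim_rec_const)
qed

lemma prim_rec_pred_conj [prim_rec_intros]:
  "prim_rec_pred P \<Longrightarrow> prim_rec_pred Q \<Longrightarrow> prim_rec_pred (\<lambda>xs. P xs \<and> Q xs)"
proof -
  have eq: "(\<lambda>xs. of_bool (P xs \<and> Q xs)) = (\<lambda>xs. if P xs then of_bool (Q xs) else 0 :: nat)"
    by auto
  show "prim_rec_pred P \<Longrightarrow> prim_rec_pred Q \<Longrightarrow> ?thesis"
    unfolding prim_rec_pred_def[of "\<lambda>xs. P xs \<and> Q xs"] eq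
    by (intro prim_rec_If prim_rec_const) (simp_all add: prim_rec_pred_def)
qed

lemma prim_rec_pred_disj [prim_rec_intros]:
  assumes "prim_rec_pred P" "prim_rec_pred Q"
  shows "prim_rec_pred (\<lambda>xs. P xs \<or> Q xs)"
proof -
  have "prim_rec_pred (\<lambda>xs. \<not> (\<not> P xs \<and> \<not> Q xs))"
    using assms by (intro prim_rec_pred_not prim_rec_pred_conj)
  then show ?thesis by simp
qed

lemma prim_rec_pred_imp [prim_rec_intros]:
  assumes "prim_rec_pred P" "prim_rec_pred Q"
  shows "prim_rec_pred (\<lambda>xs. P xs \<longrightarrow> Q xs)"
proof -
  have "prim_rec_pred (\<lambda>xs. \<not> P xs \<or> Q xs)"
    using assms by (intro prim_rec_pred_not prim_rec_pred_disj)
  then show ?thesis by simp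
qed

lemma prim_rec_pred_eq [prim_rec_intros]:
  assumes "prim_rec f" "prim_rec g"
  shows "prim_rec_pred (\<lambda>xs. f xs = g xs)"
proof -
  have "(\<lambda>xs. f xs = g xs) = (\<lambda>xs. \<not> f xs < g xs \<and> \<not> g xs < f xs)" by auto
  then show ?thesis using assms by (simp only:) (intro prim_rec_intros)
qed

lemma prim_rec_skip_second:
  assumes "prim_rec (\<lambda>ys. f (nth_default 0 ys 0) (tl ys))"
  shows "prim_rec (\<lambda>ys. f (nth_default 0 ys 0) (drop 2 ys))"
proof -
  have "f (nth_default 0 (take 1 ys @ drop (1 + 1) ys) 0) (tl (take 1 ys @ drop (1 + 1) ys)) =
      f (nth_default 0 ys 0) (drop 2 ys)" for ys
    by (cases ys) auto
  then show ?thesis using prim_rec_delete_args[OF assms, of 1 1] by (simp only:)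
qed

lemma prim_rec_pred_all_less [prim_rec_intros]:
  assumes "prim_rec n" "prim_rec_pred (\<lambda>ys. P (nth_default 0 ys 0) (tl ys))"
  shows "prim_rec_pred (\<lambda>xs. \<forall>i < n xs. P i xs)"
proof -
  have rec: "rec_nat 1 (\<lambda>i r. if r = 0 then 0 else of_bool (P i xs)) m = of_bool (\<forall>i < m. P i xs)"
    for m xs by (induction m) (auto simp: less_Suc_eq)
  have "prim_rec (\<lambda>ys. of_bool (P (nth_default 0 ys 0) (drop 2 ys)))"
    using assms(2) unfolding prim_rec_pred_def by (rule prim_rec_skip_second)
  then have "prim_rec (\<lambda>xs. rec_nat 1 (\<lambda>i r. if r = 0 then 0 else of_bool (P i xs)) (n xs))"
    using assms(1) by (intro prim_rec_rec_nat prim_rec_if_zero prim_rec_intros)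
  then show ?thesis unfolding prim_rec_pred_def rec .
qed

lemma prim_rec_pred_ex_less [prim_rec_intros]:
  assumes "prim_rec n" "prim_rec_pred (\<lambda>ys. P (nth_default 0 ys 0) (tl ys))"
  shows "prim_rec_pred (\<lambda>xs. \<exists>i < n xs. P i xs)"
  using prim_rec_pred_not[OF prim_rec_pred_all_less[of n "\<lambda>i xs. \<not> P i xs"]] assms
  by (simp add: prim_rec_pred_not)

lemma prim_rec_Least:
  assumes "prim_rec n" "prim_rec_pred (\<lambda>ys. P (nth_default 0 ys 0) (tl ys))"
    and "\<And>xs. \<exists>i < n xs. P i xs"
  shows "prim_rec (\<lambda>xs. LEAST i. P i xs)"
proof -
  have "rec_nat 0 (\<lambda>i r. if r < i then r else if P i xs then i else Suc i) m =
      (if \<exists>i < m. P i xs then LEAST i. P i xs else m)" for m xs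
  proof (induction m)
    case (Suc m)
    show ?case
    proof (cases "\<exists>i < m. P i xs")
      case True
      then have "(LEAST i. P i xs) < m" by (meson LeastI less_le_trans not_less_Least not_le)
      moreover have "\<exists>i < Suc m. P i xs" using True less_SucI by blast
      ultimately show ?thesis using Suc True by auto
    next
      case False
      then have "(LEAST i. P i xs) = m" if "P m xs"
        using that by (intro Least_equality) (auto simp: not_less)
      then show ?thesis using Suc False by (auto simp: less_Suc_eq)
    qed
  qed simp
  moreover have
    "prim_rec (\<lambda>xs. rec_nat 0 (\<lambda>i r. if r < i then r else if P i xs then i else Suc i) (n xs))"
  proof -
    have "prim_rec_pred (\<lambda>ys. P (nth_default 0 ys 0) (drop 2 ys))"
      using assms(2) unfolding prim_rec_pred_def by (rule prim_rec_skip_second)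
    then show ?thesis using assms(1) by (intro prim_rec_rec_nat prim_rec_intros)
  qed
  ultimately show ?thesis using assms(3) by simp
qed

lemma prim_rec_funpow:
  assumes "prim_rec (\<lambda>ys. g (nth_default 0 ys 1))" "prim_rec n" "prim_rec f"
  shows "prim_rec (\<lambda>xs. (g ^^ n xs) (f xs))"
proof -
  have "rec_nat m (\<lambda>i r. g r) k = (g ^^ k) m" for m k by (induction k) auto
  moreover have "prim_rec (\<lambda>xs. rec_nat (f xs) (\<lambda>i r. g r) (n xs))"
    using assms by (intro prim_rec_rec_nat)
  ultimately show ?thesis by simp
qed

lemma prim_rec_triangle: "prim_rec f \<Longrightarrow> prim_rec (\<lambda>xs. triangle (f xs))"
proof -
  have "rec_nat 0 (\<lambda>i r. r + Suc i) n = triangle n" for n by (induction n) auto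
  moreover assume "prim_rec f"
  then have "prim_rec (\<lambda>xs. rec_nat 0 (\<lambda>i r. r + Suc i) (f xs))"
    by (intro prim_rec_rec_nat prim_rec_intros)
  ultimately show ?thesis by simp
qed

lemma prim_rec_prod_encode [prim_rec_intros]:
  "prim_rec f \<Longrightarrow> prim_rec g \<Longrightarrow> prim_rec (\<lambda>xs. prod_encode (f xs, g xs))"
  unfolding prod_encode_def prod.case by (intro prim_rec_intros prim_rec_triangle)

lemma prim_rec_tl: "prim_rec f \<Longrightarrow> prim_rec (\<lambda>xs. f (tl xs))"
  using prim_rec_drop[of f 1] by (simp add: drop_Suc)

lemma prim_rec_prod_decode:
  assumes "prim_rec f"
  shows "prim_rec (\<lambda>xs. fst (prod_decode (f xs)))" "prim_rec (\<lambda>xs. snd (prod_decode (f xs)))"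
proof -
  have bound: "fst (prod_decode m) < Suc m" "snd (prod_decode m) < Suc m" for m
    using le_prod_encode_1[of "fst (prod_decode m)" "snd (prod_decode m)"]
      le_prod_encode_2[of "snd (prod_decode m)" "fst (prod_decode m)"] by simp_all
  have decode_eq: "prod_encode (a, b) = m \<longleftrightarrow> prod_decode m = (a, b)" for a b m
    by (metis prod_decode_inverse prod_encode_inverse)
  have fst_eq: "fst (prod_decode m) = (LEAST a. \<exists>b < Suc m. prod_encode (a, b) = m)" for m
  proof (rule Least_equality[symmetric])
    show "\<exists>b < Suc m. prod_encode (fst (prod_decode m), b) = m"
      using bound(2) by (intro exI[of _ "snd (prod_decode m)"]) simp
  qed (auto simp: decode_eq)
  have snd_eq: "snd (prod_decode m) = (LEAST b. \<exists>a < Suc m. prod_encode (a, b) = m)" for m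
  proof (rule Least_equality[symmetric])
    show "\<exists>a < Suc m. prod_encode (a, snd (prod_decode m)) = m"
      using bound(1) by (intro exI[of _ "fst (prod_decode m)"]) simp
  qed (auto simp: decode_eq)
  have f1: "prim_rec (\<lambda>ys. f (tl ys))" and f2: "prim_rec (\<lambda>ys. f (tl (tl ys)))"
    using prim_rec_tl[OF assms] prim_rec_tl[OF prim_rec_tl[OF assms]] by simp_all
  have "prim_rec (\<lambda>xs. LEAST a. \<exists>b < Suc (f xs). prod_encode (a, b) = f xs)"
    using bound by (intro prim_rec_Least[where n = "\<lambda>xs. Suc (f xs)"] prim_rec_intros
        prim_rec_prod_encode assms f1 f2) (metis decode_eq prod.collapse)
  moreover have "prim_rec (\<lambda>xs. LEAST b. \<exists>a < Suc (f xs). prod_encode (a, b) = f xs)"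
    using bound by (intro prim_rec_Least[where n = "\<lambda>xs. Suc (f xs)"] prim_rec_intros
        prim_rec_prod_encode assms f1 f2) (metis decode_eq prod.collapse)
  ultimately show "prim_rec (\<lambda>xs. fst (prod_decode (f xs)))" "prim_rec (\<lambda>xs. snd (prod_decode (f xs)))"
    unfolding fst_eq snd_eq .
qed

definition code_nth :: "nat \<Rightarrow> nat \<Rightarrow> nat" where
  "code_nth c i = nth_default 0 (list_decode c) i"

definition code_length :: "nat \<Rightarrow> nat" where
  "code_length c = length (list_decode c)"

lemma code_nth_list_encode [simp]: "code_nth (list_encode xs) i = nth_default 0 xs i"
  by (simp add: code_nth_def)

lemma code_length_list_encode [simp]: "code_length (list_encode xs) = length xs"
  by (simp add: code_length_def)

definition code_tl :: "nat \<Rightarrow> nat" where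
  "code_tl c = snd (prod_decode (c - 1))"

lemma prod_decode_0: "prod_decode 0 = (0, 0)"
  using prod_encode_inverse[of "(0, 0)"] by (simp add: prod_encode_def)

lemma list_decode_code_tl: "list_decode (code_tl c) = tl (list_decode c)"
  by (cases c) (simp_all add: code_tl_def prod_decode_0 split: prod.split)

lemma list_decode_funpow_code_tl: "list_decode ((code_tl ^^ i) c) = drop i (list_decode c)"
  by (induction i) (simp_all add: list_decode_code_tl drop_Suc tl_drop)

lemma code_nth_eq: "code_nth c i = fst (prod_decode ((code_tl ^^ i) c - 1))"
proof -
  have head: "nth_default 0 (list_decode d) 0 = fst (prod_decode (d - 1))" for d
    by (cases d) (simp_all add: prod_decode_0 split: prod.split)
  have "nth_default 0 xs i = nth_default 0 (drop i xs) 0" for xs :: "nat list"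
    by (simp add: nth_default_def)
  then show ?thesis
    unfolding code_nth_def head[symmetric] list_decode_funpow_code_tl by simp
qed

lemma list_decode_eq_Nil_iff: "list_decode c = [] \<longleftrightarrow> c = 0"
  by (metis list_decode.simps(1) list_decode_inverse list_encode.simps(1))

lemma funpow_code_tl_eq_0_iff: "(code_tl ^^ i) c = 0 \<longleftrightarrow> code_length c \<le> i"
  unfolding list_decode_eq_Nil_iff[symmetric] list_decode_funpow_code_tl code_length_def by simp

lemma code_length_eq: "code_length c = (LEAST i. (code_tl ^^ i) c = 0)"
  unfolding funpow_code_tl_eq_0_iff by (intro Least_equality[symmetric]) auto

lemma length_le_list_encode: "length xs \<le> list_encode xs"
proof (induction xs)
  case (Cons x xs)
  then show ?case using le_prod_encode_2[of "list_encode xs" x] by simp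
qed simp

lemma prim_rec_funpow_code_tl:
  "prim_rec i \<Longrightarrow> prim_rec c \<Longrightarrow> prim_rec (\<lambda>xs. (code_tl ^^ i xs) (c xs))"
  unfolding code_tl_def by (intro prim_rec_funpow prim_rec_prod_decode prim_rec_intros)

lemma prim_rec_code_nth [prim_rec_intros]:
  "prim_rec c \<Longrightarrow> prim_rec i \<Longrightarrow> prim_rec (\<lambda>xs. code_nth (c xs) (i xs))"
  unfolding code_nth_eq by (intro prim_rec_prod_decode prim_rec_funpow_code_tl prim_rec_intros)

lemma prim_rec_code_length [prim_rec_intros]:
  assumes "prim_rec c"
  shows "prim_rec (\<lambda>xs. code_length (c xs))"
proof -
  have "code_length (c xs) < Suc (c xs)" for xs
    using length_le_list_encode[of "list_decode (c xs)"] by (simp add: code_length_def)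
  then have bound: "\<exists>i < Suc (c xs). (code_tl ^^ i) (c xs) = 0" for xs
    using funpow_code_tl_eq_0_iff by blast
  have "prim_rec_pred (\<lambda>ys. (code_tl ^^ nth_default 0 ys 0) (c (tl ys)) = 0)"
    using prim_rec_tl[OF assms] by (intro prim_rec_pred_eq prim_rec_funpow_code_tl prim_rec_intros)
  then show ?thesis unfolding code_length_eq
    using bound assms by (intro prim_rec_Least[where n = "\<lambda>xs. Suc (c xs)"] prim_rec_Suc)
qed

(* The certificate is the first argument, the one RMin searches over. *)
lemma prim_rec_pred_eval_recf:
  assumes "prim_rec_pred (\<lambda>xs. R (nth_default 0 xs 1) (nth_default 0 xs 0))"
  obtains f where "\<And>t n. eval_recf f [t, n] (of_bool (R n t))"
proof -
  obtain e where "peval e = (\<lambda>xs. of_bool (R (nth_default 0 xs 1) (nth_default 0 xs 0)))"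
    using assms unfolding prim_rec_pred_def prim_rec_def by blast
  moreover obtain f where "\<forall>xs. length xs = 2 \<longrightarrow> eval_recf f xs (peval e xs)"
    using peval_recursive by blast
  ultimately have "eval_recf f [t, n] (of_bool (R n t))" for t n
    by (auto dest: spec[of _ "[t, n]"])
  then show ?thesis by (rule that)
qed

lemma decidable_on_by_certificate_search:
  fixes Yes No :: "nat \<Rightarrow> nat \<Rightarrow> bool"
  assumes yes: "prim_rec_pred (\<lambda>xs. Yes (nth_default 0 xs 1) (nth_default 0 xs 0))"
    and no: "prim_rec_pred (\<lambda>xs. No (nth_default 0 xs 1) (nth_default 0 xs 0))"
    and exists: "\<And>n. Promise n \<Longrightarrow> \<exists>t. Yes n t \<or> No n t"
    and yes_sound: "\<And>n t. Promise n \<Longrightarrow> Yes n t \<Longrightarrow> Q n"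
    and no_sound: "\<And>n t. Promise n \<Longrightarrow> No n t \<Longrightarrow> \<not> Q n"
  shows "decidable_on Promise Q"
proof -
  have "prim_rec_pred (\<lambda>xs. \<not> (Yes (nth_default 0 xs 1) (nth_default 0 xs 0) \<or>
      No (nth_default 0 xs 1) (nth_default 0 xs 0)))"
    using yes no by (intro prim_rec_intros)
  then obtain f_search
    where f_search: "\<And>t n. eval_recf f_search [t, n] (of_bool (\<not> (Yes n t \<or> No n t)))"
    by (rule prim_rec_pred_eval_recf) blast
  obtain f_answer where f_answer: "\<And>t n. eval_recf f_answer [t, n] (of_bool (Yes n t))"
    using yes by (rule prim_rec_pred_eval_recf) blast
  have "eval_recf (RComp f_answer [RMin f_search, RProj 0]) [n] (if Q n then 1 else 0)"
    if "Promise n" for n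
  proof -
    define t where "t = (LEAST t. Yes n t \<or> No n t)"
    have found: "Yes n t \<or> No n t" unfolding t_def using exists[OF that] by (rule LeastI_ex)
    have "eval_recf (RMin f_search) [n] t"
    proof (rule eval_recf.mini)
      show "eval_recf f_search [t, n] 0" using f_search[of t n] found by simp
      show "\<forall>m < t. \<exists>k. eval_recf f_search [m, n] (Suc k)"
      proof (intro allI impI)
        fix m assume "m < t"
        then have "\<not> (Yes n m \<or> No n m)" unfolding t_def by (rule not_less_Least)
        then show "\<exists>k. eval_recf f_search [m, n] (Suc k)" using f_search[of m n] by auto
      qed
    qed
    moreover have "eval_recf (RProj 0) [n] n" using eval_recf.proj[of 0 "[n]"] by simp
    ultimately have "eval_recf (RComp f_answer [RMin f_search, RProj 0]) [n] (of_bool (Yes n t))"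
      using f_answer by (intro eval_recf.comp[where zs = "[t, n]"]) (auto simp: nth_Cons')
    moreover have "of_bool (Yes n t) = (if Q n then 1 else (0::nat))"
      using found yes_sound[OF that] no_sound[OF that] by auto
    ultimately show ?thesis by simp
  qed
  then show ?thesis unfolding decidable_on_def by blast
qed

section \<open>Quotients and contexts of regular languages\<close>

definition lquot :: "nat list \<Rightarrow> nat list set \<Rightarrow> nat list set" where
  "lquot u L = {z. u @ z \<in> L}"

definition conc :: "nat list set \<Rightarrow> nat list set \<Rightarrow> nat list set" where
  "conc A B = {u @ v | u v. u \<in> A \<and> v \<in> B}"

lemma concI: "u \<in> A \<Longrightarrow> v \<in> B \<Longrightarrow> u @ v \<in> conc A B"
  unfolding conc_def by blast

lemma star_lang_append: "u \<in> star_lang A \<Longrightarrow> v \<in> star_lang A \<Longrightarrow> u @ v \<in> star_lang A"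
  by (induction u rule: star_lang.induct) (auto intro: star_lang.intros)

lemma star_lang_single: "u \<in> A \<Longrightarrow> u \<in> star_lang A"
  using star_lang.star_app[OF _ star_lang.star_nil] by fastforce

lemma lquot_Un: "lquot u (A \<union> B) = lquot u A \<union> lquot u B"
  by (auto simp: lquot_def)

lemma lquot_conc:
  "lquot u (conc A B) = conc (lquot u A) B \<union> \<Union> {lquot v B | v. \<exists>w \<in> A. u = w @ v}"
proof (intro set_eqI iffI)
  fix z
  assume "z \<in> lquot u (conc A B)"
  then obtain x y where xy: "u @ z = x @ y" "x \<in> A" "y \<in> B" unfolding lquot_def conc_def by auto
  then obtain us where "u = x @ us \<and> us @ z = y \<or> u @ us = x \<and> z = us @ y"
    by (auto simp: append_eq_append_conv2)
  then show "z \<in> conc (lquot u A) B \<union> \<Union> {lquot v B | v. \<exists>w \<in> A. u = w @ v}"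
  proof
    assume "u = x @ us \<and> us @ z = y"
    then have "z \<in> lquot us B" "\<exists>w \<in> A. u = w @ us" using xy by (auto simp: lquot_def)
    then show ?thesis by blast
  next
    assume "u @ us = x \<and> z = us @ y"
    then show ?thesis using xy by (auto simp: lquot_def intro: concI)
  qed
next
  fix z
  assume "z \<in> conc (lquot u A) B \<union> \<Union> {lquot v B | v. \<exists>w \<in> A. u = w @ v}"
  then show "z \<in> lquot u (conc A B)"
  proof
    assume "z \<in> conc (lquot u A) B"
    then obtain x y where "z = x @ y" "u @ x \<in> A" "y \<in> B" by (auto simp: conc_def lquot_def)
    then show ?thesis using concI[of "u @ x" A y B] by (simp add: lquot_def)
  next
    assume "z \<in> \<Union> {lquot v B | v. \<exists>w \<in> A. u = w @ v}"
    then obtain v w where "v @ z \<in> B" "w \<in> A" "u = w @ v" by (auto simp: lquot_def)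
    then show ?thesis using concI[of w A "v @ z" B] by (simp add: lquot_def)
  qed
qed

lemma star_lang_split:
  assumes "u @ z \<in> star_lang A"
  shows "u \<in> star_lang A \<and> z \<in> star_lang A \<or>
    (\<exists>w v z1 z2. u = w @ v \<and> w \<in> star_lang A \<and> z = z1 @ z2 \<and> v @ z1 \<in> A \<and> z2 \<in> star_lang A)"
  using assms
proof (induction "u @ z" arbitrary: u z rule: star_lang.induct)
  case star_nil
  then show ?case by (auto intro: star_lang.intros)
next
  case (star_app x y)
  then obtain us where "x = u @ us \<and> us @ y = z \<or> x @ us = u \<and> y = us @ z"
    by (auto simp: append_eq_append_conv2)
  then show ?case
  proof
    assume "x = u @ us \<and> us @ y = z"
    then show ?thesis using star_app.hyps(1,2)
      by (intro disjI2 exI[of _ "[]"] exI[of _ u] exI[of _ us] exI[of _ y])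
        (auto intro: star_lang.intros)
  next
    assume split: "x @ us = u \<and> y = us @ z"
    from star_app.hyps(3)[OF conjunct2[OF split]] show ?thesis
    proof (elim disjE exE conjE)
      assume "us \<in> star_lang A" "z \<in> star_lang A"
      then show ?thesis using split star_app.hyps(1) by (auto intro: star_lang.intros)
    next
      fix w v z1 z2
      assume "us = w @ v" "w \<in> star_lang A" "z = z1 @ z2" "v @ z1 \<in> A" "z2 \<in> star_lang A"
      then show ?thesis using split star_app.hyps(1)
        by (intro disjI2 exI[of _ "x @ w"] exI[of _ v] exI[of _ z1] exI[of _ z2])
          (auto intro: star_lang.intros)
    qed
  qed
qed

lemma lquot_star_lang:
  "lquot u (star_lang A) = (if u \<in> star_lang A then star_lang A else {}) \<union>
     \<Union> {conc (lquot v A) (star_lang A) | v. \<exists>w \<in> star_lang A. u = w @ v}"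
  (is "_ = ?R")
proof (intro set_eqI iffI)
  fix z
  assume "z \<in> lquot u (star_lang A)"
  then have "u @ z \<in> star_lang A" unfolding lquot_def by simp
  from star_lang_split[OF this] show "z \<in> ?R"
  proof (elim disjE exE conjE)
    fix w v z1 z2
    assume "u = w @ v" "w \<in> star_lang A" "z = z1 @ z2" "v @ z1 \<in> A" "z2 \<in> star_lang A"
    then have "z \<in> conc (lquot v A) (star_lang A)" by (auto simp: lquot_def intro: concI)
    with \<open>u = w @ v\<close> \<open>w \<in> star_lang A\<close> show "z \<in> ?R" by blast
  qed simp
next
  fix z
  assume "z \<in> ?R"
  then show "z \<in> lquot u (star_lang A)"
  proof (elim UnE)
    assume "z \<in> (if u \<in> star_lang A then star_lang A else {})"
    then show ?thesis by (auto simp: lquot_def split: if_splits intro: star_lang_append)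
  next
    assume "z \<in> \<Union> {conc (lquot v A) (star_lang A) | v. \<exists>w \<in> star_lang A. u = w @ v}"
    then obtain v w z1 z2 where "u = w @ v" "w \<in> star_lang A" "z = z1 @ z2" "v @ z1 \<in> A"
      "z2 \<in> star_lang A"
      by (auto simp: conc_def lquot_def)
    then show ?thesis
      using star_lang_append[OF \<open>w \<in> star_lang A\<close>
          star_lang_append[OF star_lang_single[OF \<open>v @ z1 \<in> A\<close>] \<open>z2 \<in> star_lang A\<close>]]
      by (simp add: lquot_def)
  qed
qed

lemma finite_range_lquot_Un:
  assumes "finite (range (\<lambda>u. lquot u A))" "finite (range (\<lambda>u. lquot u B))"
  shows "finite (range (\<lambda>u. lquot u (A \<union> B)))"
proof (rule finite_subset)
  show "range (\<lambda>u. lquot u (A \<union> B)) \<subseteq>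
      (\<lambda>(X, Y). X \<union> Y) ` (range (\<lambda>u. lquot u A) \<times> range (\<lambda>u. lquot u B))"
  proof (rule image_subsetI)
    fix u
    show "lquot u (A \<union> B) \<in> (\<lambda>(X, Y). X \<union> Y) ` (range (\<lambda>u. lquot u A) \<times> range (\<lambda>u. lquot u B))"
      unfolding lquot_Un by (rule image_eqI[of _ _ "(lquot u A, lquot u B)"]) simp_all
  qed
qed (simp add: assms)

lemma finite_range_lquot_conc:
  assumes "finite (range (\<lambda>u. lquot u A))" "finite (range (\<lambda>u. lquot u B))"
  shows "finite (range (\<lambda>u. lquot u (conc A B)))"
proof (rule finite_subset)
  let ?F = "\<lambda>(X, \<Y>). conc X B \<union> \<Union> \<Y>"
  show "range (\<lambda>u. lquot u (conc A B)) \<subseteq> ?F ` (range (\<lambda>u. lquot u A) \<times> Pow (range (\<lambda>u. lquot u B)))"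
  proof (rule image_subsetI)
    fix u
    show "lquot u (conc A B) \<in> ?F ` (range (\<lambda>u. lquot u A) \<times> Pow (range (\<lambda>u. lquot u B)))"
      unfolding lquot_conc
      by (rule image_eqI[of _ _ "(lquot u A, {lquot v B | v. \<exists>w \<in> A. u = w @ v})"]) auto
  qed
qed (simp add: assms)

lemma finite_range_lquot_star_lang:
  assumes "finite (range (\<lambda>u. lquot u A))"
  shows "finite (range (\<lambda>u. lquot u (star_lang A)))"
proof (rule finite_subset)
  let ?F = "\<lambda>(c, \<X>). (if c then star_lang A else {}) \<union> \<Union> ((\<lambda>X. conc X (star_lang A)) ` \<X>)"
  show "range (\<lambda>u. lquot u (star_lang A)) \<subseteq> ?F ` (UNIV \<times> Pow (range (\<lambda>u. lquot u A)))"
  proof (rule image_subsetI)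
    fix u
    show "lquot u (star_lang A) \<in> ?F ` (UNIV \<times> Pow (range (\<lambda>u. lquot u A)))"
      unfolding lquot_star_lang
      by (rule image_eqI[of _ _ "(u \<in> star_lang A, {lquot v A | v. \<exists>w \<in> star_lang A. u = w @ v})"])
        auto
  qed
qed (simp add: assms)

lemma finite_range_lquot_lang: "finite (range (\<lambda>u. lquot u (lang r)))"
proof (induction r)
  case ZeroR
  have "range (\<lambda>u. lquot u (lang ZeroR)) \<subseteq> {{}}" by (auto simp: lquot_def)
  then show ?case by (rule finite_subset) simp
next
  case OneR
  have "range (\<lambda>u. lquot u (lang OneR)) \<subseteq> {{[]}, {}}" by (auto simp: lquot_def)
  then show ?case by (rule finite_subset) simp
next
  case (AtomR a)
  have "lquot u {[a]} \<in> {{[a]}, {[]}, {}}" for u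
    by (cases u; cases "tl u") (auto simp: lquot_def)
  then have "range (\<lambda>u. lquot u (lang (AtomR a))) \<subseteq> {{[a]}, {[]}, {}}" by auto
  then show ?case by (rule finite_subset) simp
next
  case (PlusR r s)
  then show ?case using finite_range_lquot_Un by simp
next
  case (TimesR r s)
  have "lang (TimesR r s) = conc (lang r) (lang s)" by (simp add: conc_def)
  then show ?case using finite_range_lquot_conc[OF TimesR.IH] by simp
next
  case (StarR r)
  then show ?case using finite_range_lquot_star_lang by simp
qed

definition contexts :: "nat list set \<Rightarrow> nat list \<Rightarrow> (nat list \<times> nat list) set" where
  "contexts L u = {(x, y). x @ u @ y \<in> L}"

(* contexts L u is determined by the action of lquot u on the finitely many left quotients of L. *)
lemma finite_range_contexts:
  assumes "regular L"
  shows "finite (range (contexts L))"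
proof -
  let ?Q = "range (\<lambda>x. lquot x L)"
  have "finite ?Q" using assms finite_range_lquot_lang unfolding regular_def by blast
  define graph where "graph u = {(K, lquot u K) | K. K \<in> ?Q}" for u
  define ctx_of where "ctx_of G = {(x, y). \<exists>K. (lquot x L, K) \<in> G \<and> y \<in> K}"
    for G :: "(nat list set \<times> nat list set) set"
  have lquot_lquot: "lquot u (lquot x L) = lquot (x @ u) L" for x u by (auto simp: lquot_def)
  have "contexts L u = ctx_of (graph u)" for u
    unfolding ctx_of_def graph_def contexts_def by (auto simp: lquot_lquot) (auto simp: lquot_def)
  moreover have "graph u \<in> Pow (?Q \<times> ?Q)" for u
    unfolding graph_def by (auto simp: lquot_lquot)
  ultimately have "range (contexts L) \<subseteq> ctx_of ` Pow (?Q \<times> ?Q)" by blast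
  then show ?thesis by (rule finite_subset) (simp add: \<open>finite ?Q\<close>)
qed

lemma contexts_Nil: "([], []) \<in> contexts L u \<longleftrightarrow> u \<in> L"
  by (simp add: contexts_def)

lemma contexts_append:
  "contexts L u = contexts L u' \<Longrightarrow> contexts L v = contexts L v' \<Longrightarrow>
    contexts L (u @ v) = contexts L (u' @ v')"
proof -
  have left: "contexts L (u @ v) = {(x, y). (x, v @ y) \<in> contexts L u}" for u v
    by (simp add: contexts_def)
  have right: "contexts L (u @ v) = {(x, y). (x @ u, y) \<in> contexts L v}" for u v
    by (simp add: contexts_def)
  assume "contexts L u = contexts L u'" "contexts L v = contexts L v'"
  then show ?thesis using left[of u v] left[of u' v] right[of u' v] right[of u' v'] by simp
qed

lemma finite_range_numbering:
  assumes "finite (range f)"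
  obtains k :: nat and c where "\<And>x. c x < k" "\<And>m. m < k \<Longrightarrow> \<exists>x. c x = m"
    "\<And>x y. c x = c y \<longleftrightarrow> f x = f y"
proof -
  obtain h where h: "bij_betw h {..<card (range f)} (range f)"
    using ex_bij_betw_nat_finite[OF assms] atLeast0LessThan by auto
  define c where "c x = inv_into {..<card (range f)} h (f x)" for x
  have "c x < card (range f)" for x
    using h unfolding c_def by (metis bij_betw_def inv_into_into lessThan_iff rangeI)
  moreover have "\<exists>x. c x = m" if "m < card (range f)" for m
    using h that unfolding c_def bij_betw_def by (metis image_iff inv_into_f_f lessThan_iff)
  moreover have "c x = c y \<longleftrightarrow> f x = f y" for x y
    using h unfolding c_def bij_betw_def by (metis f_inv_into_f rangeI)
  ultimately show ?thesis using that by blast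
qed

lemma regular_family_monoid:
  assumes "finite \<L>" "\<forall>L \<in> \<L>. regular L"
  obtains k :: nat and cl :: "nat list \<Rightarrow> nat" and mult
  where "\<And>u. cl u < k" "\<And>m. m < k \<Longrightarrow> \<exists>u. cl u = m"
    "\<And>u v. mult (cl u) (cl v) = cl (u @ v)"
    "\<And>L u v. L \<in> \<L> \<Longrightarrow> cl u = cl v \<Longrightarrow> u \<in> L \<Longrightarrow> v \<in> L"
proof -
  define syn where "syn u = (\<lambda>L \<in> \<L>. contexts L u)" for u
  have "range syn \<subseteq> Pi\<^sub>E \<L> (\<lambda>L. range (contexts L))"
    unfolding syn_def by auto
  moreover have "finite (Pi\<^sub>E \<L> (\<lambda>L. range (contexts L)))"
    using assms by (intro finite_PiE finite_range_contexts) auto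
  ultimately have "finite (range syn)" by (rule finite_subset)
  then obtain k :: nat and cl :: "nat list \<Rightarrow> nat"
    where cl: "\<And>u. cl u < k" "\<And>m. m < k \<Longrightarrow> \<exists>u. cl u = m" "\<And>u v. cl u = cl v \<longleftrightarrow> syn u = syn v"
    by (rule finite_range_numbering) blast
  define rep where "rep m = (SOME u. cl u = m)" for m
  have cl_rep: "cl (rep (cl u)) = cl u" for u
    unfolding rep_def by (rule someI_ex) blast
  have syn_eq: "syn u = syn v \<longleftrightarrow> (\<forall>L \<in> \<L>. contexts L u = contexts L v)" for u v
    unfolding syn_def fun_eq_iff restrict_def by (auto split: if_splits)
  have syn_append: "syn u = syn u' \<Longrightarrow> syn v = syn v' \<Longrightarrow> syn (u @ v) = syn (u' @ v')"
    for u u' v v'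
    unfolding syn_eq using contexts_append by blast
  define mult where "mult x y = cl (rep x @ rep y)" for x y
  have "mult (cl u) (cl v) = cl (u @ v)" for u v
    unfolding mult_def cl(3) using cl_rep[unfolded cl(3)] by (intro syn_append)
  moreover have "v \<in> L" if "L \<in> \<L>" "cl u = cl v" "u \<in> L" for L u v
  proof -
    have "contexts L u = contexts L v" using that(1,2) unfolding cl(3) syn_eq by blast
    then show ?thesis using that(3) contexts_Nil by metis
  qed
  ultimately show ?thesis using that cl(1,2) by blast
qed

section \<open>Reachable global states\<close>

lemma reachable_initial: "reachable P (initial_gstate P)"
  by (simp add: reachable_def)

lemma reachable_step: "reachable P G \<Longrightarrow> step P G G' \<Longrightarrow> reachable P G'"
  unfolding reachable_def by (rule rtranclp.rtrancl_into_rtrancl)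

lemma reachable_shape:
  assumes "reachable P (S, C)"
  shows "length S = length (machines P)" "length C = length (edges P)"
    "\<And>\<xi>. \<xi> < length (edges P) \<Longrightarrow> set (C ! \<xi>) \<subseteq> msgs P \<xi>"
proof -
  have "length (fst G) = length (machines P) \<and> length (snd G) = length (edges P) \<and>
      (\<forall>\<xi> < length (edges P). set (snd G ! \<xi>) \<subseteq> msgs P \<xi>)"
    if "(step P)\<^sup>*\<^sup>* (initial_gstate P) G" for G
    using that
  proof (induction rule: rtranclp_induct)
    case (step G G')
    from step.hyps(2) show ?case
    proof (cases rule: step.cases)
      case send
      then show ?thesis using step.IH by (auto simp: nth_list_update)
    next
      case (recv i \<beta> b S q C w)
      have "\<forall>\<xi> < length (edges P). set (C ! \<xi>) \<subseteq> msgs P \<xi>" using step.IH recv(1) by simp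
      then have "set (b # w) \<subseteq> msgs P \<beta>" using recv by metis
      then have "set w \<subseteq> msgs P \<beta>" by simp
      then show ?thesis using step.IH recv by (auto simp: nth_list_update)
    qed
  qed (simp add: initial_gstate_def)
  then show "length S = length (machines P)" "length C = length (edges P)"
    "\<And>\<xi>. \<xi> < length (edges P) \<Longrightarrow> set (C ! \<xi>) \<subseteq> msgs P \<xi>"
    using assms unfolding reachable_def by fastforce+
qed

lemma reachable_local_states:
  assumes "wf_protocol P" "reachable P (S, C)" "j < length (machines P)"
  shows "S ! j \<in> states P j"
proof -
  have "length (fst G) = length (machines P) \<and> (\<forall>j < length (machines P). fst G ! j \<in> states P j)"
    if "(step P)\<^sup>*\<^sup>* (initial_gstate P) G" for G
    using that
  proof (induction rule: rtranclp_induct)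
    case base
    then show ?case using assms(1) by (simp add: initial_gstate_def wf_protocol_def)
  next
    case (step G G')
    from step.hyps(2) step.IH show ?case
    proof (cases rule: step.cases)
      case (send i \<beta> b S q C)
      then have "q \<in> states P i" using assms(1) unfolding wf_protocol_def by blast
      then show ?thesis using step.IH send by (auto simp: nth_list_update)
    next
      case (recv i \<beta> b S q C w)
      then have "q \<in> states P i" using assms(1) unfolding wf_protocol_def by blast
      then show ?thesis using step.IH recv by (auto simp: nth_list_update)
    qed
  qed
  then show ?thesis using assms(2,3) unfolding reachable_def by fastforce
qed

lemma reachable_chain:
  assumes "\<forall>k < N. step P (f k) (f (Suc k))" "f 0 = initial_gstate P" "m \<le> N"
  shows "reachable P (f m)"
proof -
  have "(step P ^^ m) (f 0) (f m)"
    using assms(1,3) by (auto simp: relpowp_fun_conv intro!: exI[of _ f])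
  then show ?thesis unfolding reachable_def assms(2)[symmetric] by (metis rtranclp_power)
qed

lemma finite_reachable_composite_states:
  assumes "wf_protocol P"
  shows "finite {S. \<exists>C. reachable P (S, C)}"
proof -
  let ?U = "\<Union>j < length (machines P). states P j"
  have "set S \<subseteq> ?U" if "reachable P (S, C)" for S C
    using reachable_local_states[OF assms that] reachable_shape(1)[OF that]
    by (force simp: in_set_conv_nth)
  then have "{S. \<exists>C. reachable P (S, C)} \<subseteq> {S. set S \<subseteq> ?U \<and> length S = length (machines P)}"
    using reachable_shape(1) by blast
  moreover have "finite ?U" unfolding states_def by auto
  ultimately show ?thesis using finite_lists_length_eq finite_subset by blast
qed

lemma reachable_saturation:
  assumes "wf_protocol P" "recognizable_channel_property P"
  obtains \<L> where "finite \<L>" "\<forall>L \<in> \<L>. regular L"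
    "\<And>S C C'. reachable P (S, C) \<Longrightarrow> length C' = length C \<Longrightarrow>
       (\<And>\<xi> L. \<xi> < length C \<Longrightarrow> L \<in> \<L> \<Longrightarrow> C ! \<xi> \<in> L \<Longrightarrow> C' ! \<xi> \<in> L) \<Longrightarrow> reachable P (S, C')"
proof -
  let ?E = "length (edges P)"
  let ?prod = "\<lambda>Ls. {C. length C = ?E \<and> (\<forall>\<xi> < ?E. C ! \<xi> \<in> Ls ! \<xi>)}"
  obtain F where F: "\<And>S. (\<forall>Ls \<in> set (F S). length Ls = ?E \<and>
      (\<forall>\<xi> < ?E. regular (Ls ! \<xi>) \<and> Ls ! \<xi> \<subseteq> lists (msgs P \<xi>))) \<and>
      {C. reachable P (S, C)} = (\<Union>Ls \<in> set (F S). ?prod Ls)"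
    using choice[OF assms(2)[unfolded recognizable_channel_property_def]] by blast
  define \<L> where "\<L> = (\<Union>S \<in> {S. \<exists>C. reachable P (S, C)}. \<Union>Ls \<in> set (F S). (!) Ls ` {..<?E})"
  have "finite \<L>"
    unfolding \<L>_def using finite_reachable_composite_states[OF assms(1)] by blast
  moreover have "\<forall>L \<in> \<L>. regular L"
    unfolding \<L>_def using F by blast
  moreover have "reachable P (S, C')"
    if reach: "reachable P (S, C)" and len: "length C' = length C"
      and equiv: "\<And>\<xi> L. \<xi> < length C \<Longrightarrow> L \<in> \<L> \<Longrightarrow> C ! \<xi> \<in> L \<Longrightarrow> C' ! \<xi> \<in> L" for S C C'
  proof -
    obtain Ls where Ls: "Ls \<in> set (F S)" "C \<in> ?prod Ls"
      using reach F[of S] by blast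
    have "Ls ! \<xi> \<in> \<L>" if "\<xi> < ?E" for \<xi>
      unfolding \<L>_def using reach Ls(1) that by blast
    then have "C' \<in> ?prod Ls" using Ls(2) len equiv by auto
    then show ?thesis using Ls(1) F[of S] by blast
  qed
  ultimately show ?thesis using that by blast
qed

section \<open>Finite monoid abstractions refuting arrival\<close>

definition nat_monoid :: "nat \<Rightarrow> nat \<Rightarrow> (nat \<Rightarrow> nat \<Rightarrow> nat) \<Rightarrow> bool" where
  "nat_monoid k e mult \<longleftrightarrow> e < k \<and> (\<forall>x < k. \<forall>y < k. mult x y < k) \<and>
     (\<forall>x < k. mult e x = x \<and> mult x e = x) \<and>
     (\<forall>x < k. \<forall>y < k. \<forall>z < k. mult (mult x y) z = mult x (mult y z))"

definition word_image :: "(nat \<Rightarrow> nat \<Rightarrow> nat) \<Rightarrow> nat \<Rightarrow> (nat \<Rightarrow> nat) \<Rightarrow> nat list \<Rightarrow> nat" where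
  "word_image mult e \<phi> w = foldl (\<lambda>m a. mult m (\<phi> a)) e w"

lemma word_image_snoc: "word_image mult e \<phi> (w @ [a]) = mult (word_image mult e \<phi> w) (\<phi> a)"
  by (simp add: word_image_def)

lemma word_image_Cons:
  assumes "nat_monoid k e mult" "\<forall>a \<in> set (a # w). \<phi> a < k"
  shows "word_image mult e \<phi> (a # w) = mult (\<phi> a) (word_image mult e \<phi> w)"
    and "word_image mult e \<phi> w < k"
proof -
  have fold: "foldl (\<lambda>m a. mult m (\<phi> a)) (mult x y) w = mult x (foldl (\<lambda>m a. mult m (\<phi> a)) y w)
      \<and> foldl (\<lambda>m a. mult m (\<phi> a)) y w < k" if "x < k" "y < k" "\<forall>a \<in> set w. \<phi> a < k" for x y w
    using that
  proof (induction w arbitrary: y)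
    case (Cons a w)
    then show ?case using assms(1) unfolding nat_monoid_def by simp
  qed simp
  have "e < k" "\<phi> a < k" using assms unfolding nat_monoid_def by simp_all
  then show "word_image mult e \<phi> (a # w) = mult (\<phi> a) (word_image mult e \<phi> w)"
    "word_image mult e \<phi> w < k"
    using fold[of "\<phi> a" e w] assms unfolding word_image_def nat_monoid_def by simp_all
qed

(* Abstract global states pair a composite state with the monoid image of every channel.  Receiving
   a from a channel with image m may leave any image m' with \<phi> a \<cdot> m' = m. *)
definition abstraction_closed ::
  "protocol \<Rightarrow> nat \<Rightarrow> (nat \<Rightarrow> nat \<Rightarrow> nat) \<Rightarrow> (nat \<Rightarrow> nat) \<Rightarrow> (nat list \<times> nat list) set \<Rightarrow> bool" where
  "abstraction_closed P k mult \<phi> G \<longleftrightarrow>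
     (\<forall>(S, M) \<in> G. \<forall>i < length (machines P). \<forall>\<xi> < length (edges P). \<forall>(p', s, a, q) \<in> trans P i.
        p' = S ! i \<and> a \<in> msgs P \<xi> \<longrightarrow>
          (s \<and> tl_e P \<xi> = i \<longrightarrow> (S[i := q], M[\<xi> := mult (M ! \<xi>) (\<phi> a)]) \<in> G) \<and>
          (\<not> s \<and> hd_e P \<xi> = i \<longrightarrow> (\<forall>m < k. mult (\<phi> a) m = M ! \<xi> \<longrightarrow> (S[i := q], M[\<xi> := m]) \<in> G)))"

definition arrival_refutation ::
  "protocol \<Rightarrow> nat \<Rightarrow> nat \<Rightarrow> nat \<Rightarrow> nat \<Rightarrow> nat \<Rightarrow> (nat \<Rightarrow> nat \<Rightarrow> nat) \<Rightarrow> (nat \<Rightarrow> nat) \<Rightarrow>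
    (nat list \<times> nat list) set \<Rightarrow> bool" where
  "arrival_refutation P \<beta> b p k e mult \<phi> G \<longleftrightarrow>
     nat_monoid k e mult \<and>
     (\<forall>\<xi> < length (edges P). \<forall>a \<in> msgs P \<xi>. \<phi> a < k) \<and>
     (\<forall>(S, M) \<in> G. length S = length (machines P) \<and> length M = length (edges P) \<and> set M \<subseteq> {..<k}) \<and>
     (map (init P) [0..<length (machines P)], replicate (length (edges P)) e) \<in> G \<and>
     abstraction_closed P k mult \<phi> G \<and>
     (\<forall>(S, M) \<in> G. S ! hd_e P \<beta> = p \<longrightarrow> (\<forall>m < k. mult (\<phi> b) m \<noteq> M ! \<beta>))"

lemma arrival_refutation_invariant:
  assumes ref: "arrival_refutation P \<beta> b p k e mult \<phi> G" and reach: "reachable P (S, C)"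
  shows "(S, map (word_image mult e \<phi>) C) \<in> G"
proof -
  have "(fst X, map (word_image mult e \<phi>) (snd X)) \<in> G" if "(step P)\<^sup>*\<^sup>* (initial_gstate P) X" for X
    using that
  proof (induction rule: rtranclp_induct)
    case base
    then show ?case using ref
      by (simp add: arrival_refutation_def initial_gstate_def word_image_def map_replicate_const)
  next
    case (step X X')
    have "reachable P X" using step.hyps(1) by (simp add: reachable_def)
    from step.hyps(2) show ?case
    proof (cases rule: step.cases)
      case (send i \<xi> a S q C)
      have "(S[i := q], (map (word_image mult e \<phi>) C)[\<xi> := mult (word_image mult e \<phi> (C ! \<xi>)) (\<phi> a)])
          \<in> G"
        using ref step.IH send reachable_shape[OF \<open>reachable P X\<close>[unfolded send(1)]]
        unfolding arrival_refutation_def abstraction_closed_def by fastforce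
      then show ?thesis using send by (simp add: map_update word_image_snoc)
    next
      case (recv i \<xi> a S q C w)
      note shape = reachable_shape[OF \<open>reachable P X\<close>[unfolded recv(1)]]
      have "nat_monoid k e mult" "\<forall>c \<in> set (a # w). \<phi> c < k"
        using ref shape(3)[of \<xi>] recv unfolding arrival_refutation_def by auto
      note image = word_image_Cons[OF this]
      have "(S[i := q], (map (word_image mult e \<phi>) C)[\<xi> := word_image mult e \<phi> w]) \<in> G"
        using ref step.IH recv shape image unfolding arrival_refutation_def abstraction_closed_def
        by fastforce
      then show ?thesis using recv by (simp add: map_update)
    qed
  qed
  then show ?thesis using reach unfolding reachable_def by fastforce
qed

lemma arrival_refutation_sound:
  assumes "arrival_refutation P \<beta> b p k e mult \<phi> G" "\<beta> < length (edges P)"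
  shows "\<not> can_arrive P \<beta> b p"
proof
  assume "can_arrive P \<beta> b p"
  then obtain S C w where reach: "reachable P (S, C)" and at_p: "S ! hd_e P \<beta> = p"
    and head: "C ! \<beta> = b # w"
    unfolding can_arrive_def by blast
  note shape = reachable_shape[OF reach]
  have "nat_monoid k e mult" "\<forall>c \<in> set (b # w). \<phi> c < k"
    using assms shape(3)[of \<beta>] head unfolding arrival_refutation_def by auto
  note image = word_image_Cons[OF this]
  have "(S, map (word_image mult e \<phi>) C) \<in> G" by (rule arrival_refutation_invariant[OF assms(1) reach])
  then show False using assms at_p head image shape(2) unfolding arrival_refutation_def by fastforce
qed

lemma arrival_refutation_transfer:
  assumes ref: "arrival_refutation P \<beta> b p k e mult \<phi> G"
    and mult: "\<And>x y. x < k \<Longrightarrow> y < k \<Longrightarrow> mult' x y = mult x y"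
    and \<phi>: "\<And>\<xi> a. \<xi> < length (edges P) \<Longrightarrow> a \<in> msgs P \<xi> \<Longrightarrow> \<phi>' a = \<phi> a"
    and b: "\<beta> < length (edges P)" "b \<in> msgs P \<beta>"
  shows "arrival_refutation P \<beta> b p k e mult' \<phi>' G"
proof -
  have monoid: "nat_monoid k e mult"
    and letters: "\<And>\<xi> a. \<xi> < length (edges P) \<Longrightarrow> a \<in> msgs P \<xi> \<Longrightarrow> \<phi> a < k"
    and shapes: "\<And>S M. (S, M) \<in> G \<Longrightarrow> length M = length (edges P) \<and> set M \<subseteq> {..<k}"
    and closed: "abstraction_closed P k mult \<phi> G"
    and safe: "\<forall>(S, M) \<in> G. S ! hd_e P \<beta> = p \<longrightarrow> (\<forall>m < k. mult (\<phi> b) m \<noteq> M ! \<beta>)"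
    using ref unfolding arrival_refutation_def by auto
  have mult_less: "mult x y < k" if "x < k" "y < k" for x y
    using monoid that unfolding nat_monoid_def by blast
  have "nat_monoid k e mult'"
    using monoid unfolding nat_monoid_def by (simp add: mult mult_less)
  moreover have "(s \<and> tl_e P \<xi> = i \<longrightarrow> (S[i := q], M[\<xi> := mult' (M ! \<xi>) (\<phi>' a)]) \<in> G) \<and>
      (\<not> s \<and> hd_e P \<xi> = i \<longrightarrow> (\<forall>m < k. mult' (\<phi>' a) m = M ! \<xi> \<longrightarrow> (S[i := q], M[\<xi> := m]) \<in> G))"
    if "(S, M) \<in> G" "i < length (machines P)" "\<xi> < length (edges P)" "(S ! i, s, a, q) \<in> trans P i"
      "a \<in> msgs P \<xi>" for S M i \<xi> s a q
  proof -
    have "M ! \<xi> \<in> set M" using shapes[OF that(1)] that(3) by simp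
    then have "M ! \<xi> < k" using shapes[OF that(1)] by auto
    then show ?thesis
      using closed that \<phi>[OF that(3,5)] letters[OF that(3,5)] unfolding abstraction_closed_def
      by (simp add: mult) fast
  qed
  moreover have "\<forall>m < k. mult' (\<phi>' b) m \<noteq> M ! \<beta>" if "(S, M) \<in> G" "S ! hd_e P \<beta> = p" for S M
    using safe that \<phi>[OF b] letters[OF b] by (auto simp: mult)
  ultimately show ?thesis using ref \<phi> unfolding arrival_refutation_def abstraction_closed_def by auto
qed

locale channel_abstraction =
  fixes P :: protocol and k :: nat and cl :: "nat list \<Rightarrow> nat" and mult :: "nat \<Rightarrow> nat \<Rightarrow> nat"
  assumes cl_less: "\<And>u. cl u < k"
    and cl_onto: "\<And>m. m < k \<Longrightarrow> \<exists>u. cl u = m"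
    and mult_cl: "\<And>u v. mult (cl u) (cl v) = cl (u @ v)"
    and saturated: "\<And>S C \<xi> w. reachable P (S, C) \<Longrightarrow> \<xi> < length C \<Longrightarrow> cl w = cl (C ! \<xi>) \<Longrightarrow>
      reachable P (S, C[\<xi> := w])"
begin

definition abstract_states :: "(nat list \<times> nat list) set" where
  "abstract_states = {(S, map cl C) | S C. reachable P (S, C)}"

lemma abstract_statesE:
  assumes "(S, M) \<in> abstract_states"
  obtains C where "M = map cl C" "reachable P (S, C)"
  using assms unfolding abstract_states_def by blast

lemma abstract_statesI: "reachable P (S, C) \<Longrightarrow> (S, map cl C) \<in> abstract_states"
  unfolding abstract_states_def by blast

lemma nat_monoid: "nat_monoid k (cl []) mult"
  unfolding nat_monoid_def
proof (intro conjI allI impI)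
  fix x y z assume "x < k" "y < k" "z < k"
  then obtain u v w where "cl u = x" "cl v = y" "cl w = z" using cl_onto by metis
  then show "mult x y < k" "mult (mult x y) z = mult x (mult y z)"
    using cl_less by (auto simp: mult_cl)
next
  fix x assume "x < k"
  then obtain u where "cl u = x" using cl_onto by metis
  then show "mult (cl []) x = x" "mult x (cl []) = x" by (auto simp: mult_cl)
qed (rule cl_less)

lemma reachable_cons_channel:
  assumes "reachable P (S, C)" "\<xi> < length C" "m < k" "mult (cl [a]) m = cl (C ! \<xi>)"
  obtains w where "cl w = m" "reachable P (S, C[\<xi> := a # w])"
proof -
  obtain w where w: "cl w = m" using cl_onto assms(3) by metis
  then have "cl (a # w) = cl (C ! \<xi>)" using mult_cl[of "[a]" w] assms(4) by simp
  then show ?thesis using that w saturated[OF assms(1,2)] by blast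
qed

lemma abstract_states_closed:
  assumes mem: "(S, M) \<in> abstract_states" and i: "i < length (machines P)"
    and \<xi>: "\<xi> < length (edges P)" and trans: "(S ! i, s, a, q) \<in> trans P i" and a: "a \<in> msgs P \<xi>"
  shows "s \<and> tl_e P \<xi> = i \<Longrightarrow> (S[i := q], M[\<xi> := mult (M ! \<xi>) (cl [a])]) \<in> abstract_states"
    and "\<not> s \<and> hd_e P \<xi> = i \<Longrightarrow> m < k \<Longrightarrow> mult (cl [a]) m = M ! \<xi> \<Longrightarrow>
      (S[i := q], M[\<xi> := m]) \<in> abstract_states"
proof -
  obtain C where M: "M = map cl C" and reach: "reachable P (S, C)"
    using mem by (rule abstract_statesE)
  have \<xi>_less: "\<xi> < length C" using reachable_shape(2)[OF reach] \<xi> by simp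
  show "(S[i := q], M[\<xi> := mult (M ! \<xi>) (cl [a])]) \<in> abstract_states" if "s \<and> tl_e P \<xi> = i"
  proof -
    have "step P (S, C) (S[i := q], C[\<xi> := C ! \<xi> @ [a]])"
      using that i \<xi> trans a by (intro step.send) simp_all
    then have "(S[i := q], map cl (C[\<xi> := C ! \<xi> @ [a]])) \<in> abstract_states"
      by (rule abstract_statesI[OF reachable_step[OF reach]])
    then show ?thesis using \<xi>_less by (simp add: M map_update mult_cl)
  qed
  show "(S[i := q], M[\<xi> := m]) \<in> abstract_states"
    if recv: "\<not> s \<and> hd_e P \<xi> = i" and "m < k" "mult (cl [a]) m = M ! \<xi>"
  proof -
    have "mult (cl [a]) m = cl (C ! \<xi>)" using that(3) \<xi>_less M by simp
    then obtain w where w: "cl w = m" and reach': "reachable P (S, C[\<xi> := a # w])"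
      by (rule reachable_cons_channel[OF reach \<xi>_less \<open>m < k\<close>])
    have "step P (S, C[\<xi> := a # w]) (S[i := q], (C[\<xi> := a # w])[\<xi> := w])"
      using recv i \<xi> trans a \<xi>_less by (intro step.recv) simp_all
    then have "(S[i := q], map cl ((C[\<xi> := a # w])[\<xi> := w])) \<in> abstract_states"
      by (rule abstract_statesI[OF reachable_step[OF reach']])
    then show ?thesis using w by (simp add: M map_update)
  qed
qed

lemma abstract_states_safe:
  assumes no_arrival: "\<not> can_arrive P \<beta> b p" and \<beta>: "\<beta> < length (edges P)"
    and mem: "(S, M) \<in> abstract_states" and at_p: "S ! hd_e P \<beta> = p" and "m < k"
  shows "mult (cl [b]) m \<noteq> M ! \<beta>"
proof
  obtain C where M: "M = map cl C" and reach: "reachable P (S, C)"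
    using mem by (rule abstract_statesE)
  have \<beta>_less: "\<beta> < length C" using reachable_shape(2)[OF reach] \<beta> by simp
  assume "mult (cl [b]) m = M ! \<beta>"
  then have "mult (cl [b]) m = cl (C ! \<beta>)" using \<beta>_less M by simp
  then obtain w where "reachable P (S, C[\<beta> := b # w])"
    by (rule reachable_cons_channel[OF reach \<beta>_less \<open>m < k\<close>])
  moreover have "(C[\<beta> := b # w]) ! \<beta> = b # w" using \<beta>_less by simp
  ultimately show False using no_arrival at_p unfolding can_arrive_def by blast
qed

lemma finite_abstract_states:
  assumes "wf_protocol P"
  shows "finite abstract_states"
proof (rule finite_subset)
  show "abstract_states \<subseteq> {S. \<exists>C. reachable P (S, C)} \<times> {M. set M \<subseteq> {..<k} \<and> length M = length (edges P)}"
    unfolding abstract_states_def using reachable_shape(2)[where P = P] cl_less by fastforce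
  show "finite ({S. \<exists>C. reachable P (S, C)} \<times> {M. set M \<subseteq> {..<k} \<and> length M = length (edges P)})"
    using finite_reachable_composite_states[OF assms] by (simp add: finite_lists_length_eq)
qed

lemma abstract_states_refutation:
  assumes "\<not> can_arrive P \<beta> b p" "\<beta> < length (edges P)"
  shows "arrival_refutation P \<beta> b p k (cl []) mult (\<lambda>a. cl [a]) abstract_states"
  unfolding arrival_refutation_def
proof (intro conjI nat_monoid)
  show "\<forall>\<xi> < length (edges P). \<forall>a \<in> msgs P \<xi>. cl [a] < k" by (simp add: cl_less)
  show "\<forall>(S, M) \<in> abstract_states.
      length S = length (machines P) \<and> length M = length (edges P) \<and> set M \<subseteq> {..<k}"
    unfolding abstract_states_def using reachable_shape(1,2)[where P = P] cl_less by fastforce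
  have "(map (init P) [0..<length (machines P)], map cl (replicate (length (edges P)) []))
      \<in> abstract_states"
    using abstract_statesI reachable_initial[of P] unfolding initial_gstate_def by blast
  then show "(map (init P) [0..<length (machines P)], replicate (length (edges P)) (cl []))
      \<in> abstract_states"
    by simp
  show "abstraction_closed P k mult (\<lambda>a. cl [a]) abstract_states"
    unfolding abstraction_closed_def using abstract_states_closed by auto
  show "\<forall>(S, M) \<in> abstract_states. S ! hd_e P \<beta> = p \<longrightarrow> (\<forall>m < k. mult (cl [b]) m \<noteq> M ! \<beta>)"
    using abstract_states_safe[OF assms] by auto
qed

end

lemma arrival_refutation_exists:
  assumes wf: "wf_protocol P" and rcp: "recognizable_channel_property P"
    and \<beta>: "\<beta> < length (edges P)" and no_arrival: "\<not> can_arrive P \<beta> b p"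
  obtains k e mult \<phi> G where "finite G" "arrival_refutation P \<beta> b p k e mult \<phi> G"
proof -
  obtain \<L> where \<L>: "finite \<L>" "\<forall>L \<in> \<L>. regular L"
    and saturated: "\<And>S C C'. reachable P (S, C) \<Longrightarrow> length C' = length C \<Longrightarrow>
       (\<And>\<xi> L. \<xi> < length C \<Longrightarrow> L \<in> \<L> \<Longrightarrow> C ! \<xi> \<in> L \<Longrightarrow> C' ! \<xi> \<in> L) \<Longrightarrow> reachable P (S, C')"
    by (rule reachable_saturation[OF wf rcp]) blast
  obtain k :: nat and cl :: "nat list \<Rightarrow> nat" and mult where cl_less: "\<And>u. cl u < k"
    and cl_onto: "\<And>m. m < k \<Longrightarrow> \<exists>u. cl u = m"
    and mult_cl: "\<And>u v. mult (cl u) (cl v) = cl (u @ v)"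
    and recognizes: "\<And>L u v. L \<in> \<L> \<Longrightarrow> cl u = cl v \<Longrightarrow> u \<in> L \<Longrightarrow> v \<in> L"
    by (rule regular_family_monoid[OF \<L>]) blast
  interpret channel_abstraction P k cl mult
  proof
    fix S C \<xi> w
    assume reach: "reachable P (S, C)" and "\<xi> < length C" "cl w = cl (C ! \<xi>)"
    then show "reachable P (S, C[\<xi> := w])"
      by (intro saturated[OF reach]) (auto simp: nth_list_update intro: recognizes)
  qed (fact cl_less cl_onto mult_cl)+
  show ?thesis
    by (rule that[OF finite_abstract_states[OF wf] abstract_states_refutation[OF no_arrival \<beta>]])
qed

section \<open>Coding of instances and certificates\<close>

definition code_mem :: "nat \<Rightarrow> nat \<Rightarrow> bool" where
  "code_mem c a \<longleftrightarrow> (\<exists>j < code_length c. code_nth c j = a)"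

definition code_update :: "nat \<Rightarrow> nat \<Rightarrow> nat \<Rightarrow> nat \<Rightarrow> bool" where
  "code_update c c' i v \<longleftrightarrow> code_length c' = code_length c \<and>
     (\<forall>j < code_length c. code_nth c' j = (if j = i then v else code_nth c j))"

definition code_snoc :: "nat \<Rightarrow> nat \<Rightarrow> nat \<Rightarrow> bool" where
  "code_snoc c c' a \<longleftrightarrow> code_length c' = Suc (code_length c) \<and>
     (\<forall>j < code_length c. code_nth c' j = code_nth c j) \<and> code_nth c' (code_length c) = a"

lemma code_nth_eq_nth: "i < length (list_decode c) \<Longrightarrow> code_nth c i = list_decode c ! i"
  by (simp add: code_nth_def nth_default_nth)

lemma code_mem_iff: "code_mem c a \<longleftrightarrow> a \<in> set (list_decode c)"
  by (auto simp: code_mem_def code_length_def code_nth_eq_nth in_set_conv_nth)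

lemma code_update_iff: "code_update c c' i v \<longleftrightarrow> list_decode c' = (list_decode c)[i := v]"
proof
  assume "code_update c c' i v"
  then show "list_decode c' = (list_decode c)[i := v]"
    by (intro nth_equalityI) (auto simp: code_update_def code_length_def code_nth_eq_nth nth_list_update)
qed (auto simp: code_update_def code_length_def code_nth_eq_nth nth_list_update)

lemma code_snoc_iff: "code_snoc c c' a \<longleftrightarrow> list_decode c' = list_decode c @ [a]"
proof
  assume "code_snoc c c' a"
  then show "list_decode c' = list_decode c @ [a]"
    by (intro nth_equalityI)
      (auto simp: code_snoc_def code_length_def code_nth_eq_nth nth_append less_Suc_eq)
qed (auto simp: code_snoc_def code_length_def code_nth_eq_nth nth_append)

lemma all_less_code_length_iff:
  "(\<forall>j < code_length c. R (code_nth c j)) \<longleftrightarrow> (\<forall>a \<in> set (list_decode c). R a)"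
  by (simp add: all_set_conv_all_nth code_length_def code_nth_eq_nth)

lemma list_decode_eq_Cons_iff: "list_decode c = a # list_decode c' \<longleftrightarrow> c = Suc (prod_encode (a, c'))"
  by (metis list_decode_inverse list_encode.simps(2) list_encode_inverse)

(* Keeps codes of literal lists folded, so that code_nth_list_encode applies. *)
declare list_encode.simps [simp del]

lemma nth_default_Cons_numeral [simp]:
  "nth_default d (x # xs) (numeral k) = nth_default d xs (pred_numeral k)"
  by (simp add: numeral_eq_Suc)

definition inst_edges :: "nat \<Rightarrow> nat" where "inst_edges n = code_nth (code_nth n 0) 0"
definition inst_machines :: "nat \<Rightarrow> nat" where "inst_machines n = code_nth (code_nth n 0) 1"
definition inst_beta :: "nat \<Rightarrow> nat" where "inst_beta n = code_nth n 1"
definition inst_msg :: "nat \<Rightarrow> nat" where "inst_msg n = code_nth n 2"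
definition inst_state :: "nat \<Rightarrow> nat" where "inst_state n = code_nth n 3"
definition inst_tail :: "nat \<Rightarrow> nat \<Rightarrow> nat" where "inst_tail n \<xi> = code_nth (code_nth (inst_edges n) \<xi>) 0"
definition inst_head :: "nat \<Rightarrow> nat \<Rightarrow> nat" where "inst_head n \<xi> = code_nth (code_nth (inst_edges n) \<xi>) 1"
definition inst_msgs :: "nat \<Rightarrow> nat \<Rightarrow> nat" where "inst_msgs n \<xi> = code_nth (code_nth (inst_edges n) \<xi>) 2"
definition inst_init :: "nat \<Rightarrow> nat \<Rightarrow> nat" where
  "inst_init n j = code_nth (code_nth (inst_machines n) j) 1"
definition inst_trans :: "nat \<Rightarrow> nat \<Rightarrow> nat" where
  "inst_trans n j = code_nth (code_nth (inst_machines n) j) 2"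
definition inst_trans_field :: "nat \<Rightarrow> nat \<Rightarrow> nat \<Rightarrow> nat \<Rightarrow> nat" where
  "inst_trans_field n j u f = code_nth (code_nth (inst_trans n j) u) f"

lemmas inst_accessor_defs = inst_edges_def inst_machines_def inst_beta_def inst_msg_def inst_state_def
  inst_tail_def inst_head_def inst_msgs_def inst_init_def inst_trans_def inst_trans_field_def

definition trans_list :: "protocol \<Rightarrow> nat \<Rightarrow> trans list" where
  "trans_list P j = snd (snd (machines P ! j))"

locale instance_code =
  fixes P :: protocol and \<beta> b p n :: nat
  assumes n_def: "n = enc_instance P \<beta> b p"
begin

lemma inst_edges: "inst_edges n = list_encode (map enc_edge (edges P))"
  and inst_machines: "inst_machines n = list_encode (map enc_machine (machines P))"
  by (simp_all add: inst_edges_def inst_machines_def n_def enc_instance_def enc_protocol_def)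

lemma inst_simps [simp]:
  "code_length (inst_edges n) = length (edges P)"
  "code_length (inst_machines n) = length (machines P)"
  "inst_beta n = \<beta>" "inst_msg n = b" "inst_state n = p"
  unfolding inst_edges inst_machines by (simp_all add: inst_accessor_defs n_def enc_instance_def)

lemma inst_edge_simps [simp]:
  assumes "\<xi> < length (edges P)"
  shows "inst_tail n \<xi> = tl_e P \<xi>" "inst_head n \<xi> = hd_e P \<xi>"
    "set (list_decode (inst_msgs n \<xi>)) = msgs P \<xi>"
proof -
  obtain t h ms where e: "edges P ! \<xi> = (t, h, ms)" by (metis prod_cases3)
  then have "code_nth (inst_edges n) \<xi> = list_encode [t, h, list_encode ms]"
    using assms by (simp add: inst_edges nth_default_nth enc_edge_def)
  then show "inst_tail n \<xi> = tl_e P \<xi>" "inst_head n \<xi> = hd_e P \<xi>"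
    "set (list_decode (inst_msgs n \<xi>)) = msgs P \<xi>"
    using e by (simp_all add: inst_accessor_defs tl_e_def hd_e_def msgs_def)
qed

lemma inst_machine_simps [simp]:
  assumes "j < length (machines P)"
  shows "inst_init n j = init P j" "code_length (inst_trans n j) = length (trans_list P j)"
proof -
  obtain K h ts where m: "machines P ! j = (K, h, ts)" by (metis prod_cases3)
  then have "code_nth (inst_machines n) j =
      list_encode [list_encode K, h, list_encode (map enc_trans ts)]"
    using assms by (simp add: inst_machines nth_default_nth enc_machine_def)
  then show "inst_init n j = init P j" "code_length (inst_trans n j) = length (trans_list P j)"
    using m by (simp_all add: inst_accessor_defs init_def trans_list_def)
qed

lemma inst_trans_field:
  assumes "j < length (machines P)" "u < length (trans_list P j)" "trans_list P j ! u = (p', s, a, q)"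
  shows "inst_trans_field n j u 0 = p'" "inst_trans_field n j u 1 = of_bool s"
    "inst_trans_field n j u 2 = a" "inst_trans_field n j u 3 = q"
proof -
  obtain K h ts where m: "machines P ! j = (K, h, ts)" by (metis prod_cases3)
  then have "inst_trans n j = list_encode (map enc_trans ts)"
    using assms(1) by (simp add: inst_trans_def inst_machines nth_default_nth enc_machine_def)
  moreover have "u < length ts" "ts ! u = (p', s, a, q)"
    using assms(2,3) m by (simp_all add: trans_list_def)
  ultimately show "inst_trans_field n j u 0 = p'" "inst_trans_field n j u 1 = of_bool s"
    "inst_trans_field n j u 2 = a" "inst_trans_field n j u 3 = q"
    by (simp_all add: inst_trans_field_def nth_default_nth enc_trans_def)
qed

lemma trans_eq_set_trans_list: "trans P j = set (trans_list P j)"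
  by (simp add: trans_def trans_list_def)

end

definition gstate_code :: "gstate \<Rightarrow> nat" where
  "gstate_code G = list_encode [list_encode (fst G), list_encode (map list_encode (snd G))]"

definition locals_code :: "nat \<Rightarrow> nat" where "locals_code g = code_nth g 0"
definition channels_code :: "nat \<Rightarrow> nat" where "channels_code g = code_nth g 1"

definition gstate_decode :: "nat \<Rightarrow> gstate" where
  "gstate_decode g = (list_decode (locals_code g), map list_decode (list_decode (channels_code g)))"

lemma gstate_code_simps [simp]:
  "locals_code (gstate_code G) = list_encode (fst G)"
  "channels_code (gstate_code G) = list_encode (map list_encode (snd G))"
  "gstate_decode (gstate_code G) = G"
  by (simp_all add: gstate_code_def locals_code_def channels_code_def gstate_decode_def comp_def)

definition init_code :: "nat \<Rightarrow> nat \<Rightarrow> bool" where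
  "init_code n g \<longleftrightarrow>
     code_length (locals_code g) = code_length (inst_machines n) \<and>
     (\<forall>j < code_length (inst_machines n). code_nth (locals_code g) j = inst_init n j) \<and>
     code_length (channels_code g) = code_length (inst_edges n) \<and>
     (\<forall>\<xi> < code_length (inst_edges n). code_nth (channels_code g) \<xi> = 0)"

(* In the receive case, Suc (prod_encode (a, c)) is the code of a # list_decode c. *)
definition step_code_at :: "nat \<Rightarrow> nat \<Rightarrow> nat \<Rightarrow> nat \<Rightarrow> nat \<Rightarrow> nat \<Rightarrow> bool" where
  "step_code_at n g g' i \<xi> u \<longleftrightarrow>
     code_nth (locals_code g) i = inst_trans_field n i u 0 \<and>
     code_mem (inst_msgs n \<xi>) (inst_trans_field n i u 2) \<and>
     code_update (locals_code g) (locals_code g') i (inst_trans_field n i u 3) \<and>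
     code_update (channels_code g) (channels_code g') \<xi> (code_nth (channels_code g') \<xi>) \<and>
     (inst_trans_field n i u 1 = 1 \<and> inst_tail n \<xi> = i \<and>
        code_snoc (code_nth (channels_code g) \<xi>) (code_nth (channels_code g') \<xi>)
          (inst_trans_field n i u 2) \<or>
      inst_trans_field n i u 1 = 0 \<and> inst_head n \<xi> = i \<and>
        code_nth (channels_code g) \<xi> =
          Suc (prod_encode (inst_trans_field n i u 2, code_nth (channels_code g') \<xi>)))"

definition step_code :: "nat \<Rightarrow> nat \<Rightarrow> nat \<Rightarrow> bool" where
  "step_code n g g' \<longleftrightarrow>
     code_length (locals_code g) = code_length (inst_machines n) \<and>
     code_length (channels_code g) = code_length (inst_edges n) \<and>
     (\<exists>i < code_length (inst_machines n). \<exists>\<xi> < code_length (inst_edges n).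
        \<exists>u < code_length (inst_trans n i). step_code_at n g g' i \<xi> u)"

definition arrival_code :: "nat \<Rightarrow> nat \<Rightarrow> bool" where
  "arrival_code n g \<longleftrightarrow>
     code_nth (locals_code g) (inst_head n (inst_beta n)) = inst_state n \<and>
     0 < code_length (code_nth (channels_code g) (inst_beta n)) \<and>
     code_nth (code_nth (channels_code g) (inst_beta n)) 0 = inst_msg n"

definition yes_cert :: "nat \<Rightarrow> nat \<Rightarrow> bool" where
  "yes_cert n t \<longleftrightarrow> 0 < code_length t \<and> init_code n (code_nth t 0) \<and>
     (\<forall>k < code_length t - 1. step_code n (code_nth t k) (code_nth t (Suc k))) \<and>
     arrival_code n (code_nth t (code_length t - 1))"

context instance_code
begin

lemma init_code_sound:
  assumes "init_code n g"
  shows "gstate_decode g = initial_gstate P"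
proof -
  have "list_decode (locals_code g) = map (init P) [0..<length (machines P)]"
    using assms unfolding init_code_def inst_simps
    by (intro nth_equalityI) (auto simp: code_length_def code_nth_eq_nth)
  moreover have "map list_decode (list_decode (channels_code g)) = replicate (length (edges P)) []"
    using assms unfolding init_code_def inst_simps
    by (intro nth_equalityI) (auto simp: code_length_def code_nth_eq_nth list_decode_eq_Nil_iff)
  ultimately show ?thesis by (simp add: gstate_decode_def initial_gstate_def)
qed

lemma init_code_initial: "init_code n (gstate_code (initial_gstate P))"
  by (simp add: init_code_def initial_gstate_def list_encode.simps nth_default_nth)

lemma step_code_sound:
  assumes "step_code n g g'"
  shows "step P (gstate_decode g) (gstate_decode g')"
proof -
  obtain i \<xi> u where i: "i < length (machines P)" and \<xi>: "\<xi> < length (edges P)"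
    and u_code: "u < code_length (inst_trans n i)" and at: "step_code_at n g g' i \<xi> u"
    using assms unfolding step_code_def inst_simps by blast
  have u: "u < length (trans_list P i)" using u_code i by simp
  obtain p' s a q where tr: "trans_list P i ! u = (p', s, a, q)" by (metis prod_cases4)
  note fields = inst_trans_field[OF i u tr]
  define S where "S = list_decode (locals_code g)"
  define C where "C = map list_decode (list_decode (channels_code g))"
  have "code_length (locals_code g) = length (machines P)"
    "code_length (channels_code g) = length (edges P)"
    using assms unfolding step_code_def by simp_all
  then have lengths: "length S = length (machines P)" "length C = length (edges P)"
    by (simp_all add: S_def C_def code_length_def)
  have "(p', s, a, q) \<in> trans P i"
    unfolding trans_eq_set_trans_list tr[symmetric] using u by (rule nth_mem)
  moreover have "S ! i = p'"
    using at lengths i fields by (simp add: step_code_at_def S_def code_nth_eq_nth)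
  ultimately have tr_in: "(S ! i, s, a, q) \<in> trans P i" by simp
  have a: "a \<in> msgs P \<xi>" using at \<xi> fields by (simp add: step_code_at_def code_mem_iff)
  have dec: "gstate_decode g = (S, C)" by (simp add: gstate_decode_def S_def C_def)
  have dec': "gstate_decode g' = (S[i := q], C[\<xi> := list_decode (code_nth (channels_code g') \<xi>)])"
    using at fields
    by (simp add: step_code_at_def code_update_iff gstate_decode_def S_def C_def map_update)
  have channel: "list_decode (code_nth (channels_code g) \<xi>) = C ! \<xi>"
    using lengths \<xi> by (simp add: C_def code_nth_eq_nth)
  consider "s" "tl_e P \<xi> = i" "list_decode (code_nth (channels_code g') \<xi>) = C ! \<xi> @ [a]"
    | "\<not> s" "hd_e P \<xi> = i" "C ! \<xi> = a # list_decode (code_nth (channels_code g') \<xi>)"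
    using at \<xi> fields channel
    by (cases s) (auto simp: step_code_at_def code_snoc_iff list_decode_eq_Cons_iff[symmetric])
  then show ?thesis
  proof cases
    case 1
    then have "step P (S, C) (S[i := q], C[\<xi> := C ! \<xi> @ [a]])"
      using i \<xi> a tr_in by (intro step.send) simp_all
    then show ?thesis unfolding dec dec' using 1 by simp
  next
    case 2
    then show ?thesis unfolding dec dec' using i \<xi> a tr_in by (intro step.recv) simp_all
  qed
qed

lemma step_code_complete:
  assumes reach: "reachable P G" and step: "step P G G'"
  shows "step_code n (gstate_code G) (gstate_code G')"
  using step
proof cases
  case (send i \<xi> a S q C)
  note shape = reachable_shape[OF reach[unfolded send(1)]]
  obtain u where u: "u < length (trans_list P i)" "trans_list P i ! u = (S ! i, True, a, q)"
    using send(7) unfolding trans_eq_set_trans_list in_set_conv_nth by blast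
  note fields = inst_trans_field[OF send(3) u]
  show ?thesis unfolding step_code_def step_code_at_def send(1,2)
    using send(3-6) shape(1,2) u fields
    by (intro conjI exI[of _ i] exI[of _ \<xi>] exI[of _ u])
      (simp_all add: code_mem_iff code_update_iff code_snoc_iff map_update nth_default_nth)
next
  case (recv i \<xi> a S q C w)
  note shape = reachable_shape[OF reach[unfolded recv(1)]]
  obtain u where u: "u < length (trans_list P i)" "trans_list P i ! u = (S ! i, False, a, q)"
    using recv(7) unfolding trans_eq_set_trans_list in_set_conv_nth by blast
  note fields = inst_trans_field[OF recv(3) u]
  show ?thesis unfolding step_code_def step_code_at_def recv(1,2)
    using recv(3-6,8) shape(1,2) u fields
    by (intro conjI exI[of _ i] exI[of _ \<xi>] exI[of _ u])
      (simp_all add: code_mem_iff code_update_iff map_update nth_default_nth list_encode.simps)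
qed

lemma arrival_code_sound:
  assumes wf: "wf_protocol P" and \<beta>: "\<beta> < length (edges P)"
    and reach: "reachable P (gstate_decode g)" and arrival: "arrival_code n g"
  shows "can_arrive P \<beta> b p"
proof -
  obtain S C where dec: "gstate_decode g = (S, C)" by fastforce
  note shape = reachable_shape[OF reach[unfolded dec]]
  have S: "S = list_decode (locals_code g)" and C: "C = map list_decode (list_decode (channels_code g))"
    using dec by (auto simp: gstate_decode_def)
  have "hd_e P \<beta> < length S" using wf \<beta> shape(1) by (simp add: wf_protocol_def)
  then have "S ! hd_e P \<beta> = p" using arrival \<beta> by (simp add: arrival_code_def S code_nth_eq_nth)
  moreover have "\<exists>w. C ! \<beta> = b # w"
  proof -
    have "C ! \<beta> = list_decode (code_nth (channels_code g) \<beta>)"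
      using \<beta> shape(2) by (simp add: C code_nth_eq_nth)
    moreover have "list_decode (code_nth (channels_code g) \<beta>) \<noteq> []"
      "nth_default 0 (list_decode (code_nth (channels_code g) \<beta>)) 0 = b"
      using arrival \<beta> by (simp_all add: arrival_code_def code_length_def code_nth_def)
    ultimately show ?thesis by (metis neq_Nil_conv nth_default_Cons_0)
  qed
  ultimately show ?thesis using reach dec unfolding can_arrive_def by auto
qed

lemma arrival_code_complete:
  assumes wf: "wf_protocol P" and \<beta>: "\<beta> < length (edges P)" and reach: "reachable P (S, C)"
    and at_p: "S ! hd_e P \<beta> = p" and head: "C ! \<beta> = b # w"
  shows "arrival_code n (gstate_code (S, C))"
proof -
  note shape = reachable_shape[OF reach]
  have "hd_e P \<beta> < length S" using wf \<beta> shape(1) by (simp add: wf_protocol_def)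
  then show ?thesis using \<beta> shape(2) at_p head
    by (simp add: arrival_code_def nth_default_nth)
qed

lemma yes_cert_sound:
  assumes wf: "wf_protocol P" and \<beta>: "\<beta> < length (edges P)" and cert: "yes_cert n t"
  shows "can_arrive P \<beta> b p"
proof -
  define f where "f k = gstate_decode (code_nth t k)" for k
  define N where "N = code_length t - 1"
  have "\<forall>k < N. step P (f k) (f (Suc k))"
    using cert step_code_sound unfolding yes_cert_def f_def N_def by blast
  moreover have "f 0 = initial_gstate P"
    using cert init_code_sound unfolding yes_cert_def f_def by blast
  ultimately have "reachable P (f N)" by (rule reachable_chain) simp
  then show ?thesis
    using arrival_code_sound[OF wf \<beta>] cert unfolding yes_cert_def f_def N_def by blast
qed

lemma yes_cert_complete:
  assumes wf: "wf_protocol P" and \<beta>: "\<beta> < length (edges P)" and arrives: "can_arrive P \<beta> b p"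
  shows "\<exists>t. yes_cert n t"
proof -
  obtain S C w where reach: "reachable P (S, C)" and at_p: "S ! hd_e P \<beta> = p"
    and head: "C ! \<beta> = b # w"
    using arrives unfolding can_arrive_def by blast
  obtain N f where f: "f 0 = initial_gstate P" "f N = (S, C)" "\<forall>k < N. step P (f k) (f (Suc k))"
    using reach unfolding reachable_def rtranclp_power relpowp_fun_conv by blast
  define t where "t = list_encode (map (gstate_code \<circ> f) [0..<Suc N])"
  have nth_t: "code_nth t k = gstate_code (f k)" if "k \<le> N" for k
    using that by (simp add: t_def nth_default_nth del: upt_Suc)
  have "yes_cert n t"
    unfolding yes_cert_def
  proof (intro conjI allI impI)
    show "0 < code_length t" by (simp add: t_def)
    show "init_code n (code_nth t 0)" using nth_t[of 0] f(1) init_code_initial by simp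
    show "arrival_code n (code_nth t (code_length t - 1))"
      using nth_t[of N] f(2) arrival_code_complete[OF wf \<beta> reach at_p head] by (simp add: t_def)
    fix k assume "k < code_length t - 1"
    then have "k < N" by (simp add: t_def)
    then show "step_code n (code_nth t k) (code_nth t (Suc k))"
      using nth_t step_code_complete reachable_chain[OF f(3,1)] f(3) by simp
  qed
  then show ?thesis by blast
qed

end

(* A refutation certificate is list_encode [k, e, multiplication table, images of the messages
   0..<B, abstract states], each abstract state coded as list_encode [locals, channel images]. *)
definition cert_size :: "nat \<Rightarrow> nat" where "cert_size t = code_nth t 0"
definition cert_unit :: "nat \<Rightarrow> nat" where "cert_unit t = code_nth t 1"
definition cert_mult :: "nat \<Rightarrow> nat \<Rightarrow> nat \<Rightarrow> nat" where
  "cert_mult t x y = code_nth (code_nth (code_nth t 2) x) y"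
definition cert_letter :: "nat \<Rightarrow> nat \<Rightarrow> nat" where "cert_letter t a = code_nth (code_nth t 3) a"
definition cert_states :: "nat \<Rightarrow> nat" where "cert_states t = code_nth t 4"
definition cert_locals :: "nat \<Rightarrow> nat \<Rightarrow> nat" where
  "cert_locals t g = code_nth (code_nth (cert_states t) g) 0"
definition cert_channels :: "nat \<Rightarrow> nat \<Rightarrow> nat" where
  "cert_channels t g = code_nth (code_nth (cert_states t) g) 1"

lemmas cert_accessor_defs = cert_size_def cert_unit_def cert_mult_def cert_letter_def cert_states_def
  cert_locals_def cert_channels_def

definition cert_abstraction :: "nat \<Rightarrow> (nat list \<times> nat list) set" where
  "cert_abstraction t = (\<lambda>g. (list_decode (cert_locals t g), list_decode (cert_channels t g))) `
     {..<code_length (cert_states t)}"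

definition cert_closed_at :: "nat \<Rightarrow> nat \<Rightarrow> nat \<Rightarrow> nat \<Rightarrow> nat \<Rightarrow> nat \<Rightarrow> bool" where
  "cert_closed_at n t g i \<xi> u \<longleftrightarrow>
     (code_nth (cert_locals t g) i = inst_trans_field n i u 0 \<and>
      code_mem (inst_msgs n \<xi>) (inst_trans_field n i u 2) \<longrightarrow>
        (inst_trans_field n i u 1 = 1 \<and> inst_tail n \<xi> = i \<longrightarrow>
          (\<exists>g' < code_length (cert_states t).
             code_update (cert_locals t g) (cert_locals t g') i (inst_trans_field n i u 3) \<and>
             code_update (cert_channels t g) (cert_channels t g') \<xi>
               (cert_mult t (code_nth (cert_channels t g) \<xi>)
                 (cert_letter t (inst_trans_field n i u 2))))) \<and>
        (inst_trans_field n i u 1 = 0 \<and> inst_head n \<xi> = i \<longrightarrow>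
          (\<forall>m < cert_size t.
             cert_mult t (cert_letter t (inst_trans_field n i u 2)) m = code_nth (cert_channels t g) \<xi> \<longrightarrow>
             (\<exists>g' < code_length (cert_states t).
                code_update (cert_locals t g) (cert_locals t g') i (inst_trans_field n i u 3) \<and>
                code_update (cert_channels t g) (cert_channels t g') \<xi> m))))"

definition cert_closed :: "nat \<Rightarrow> nat \<Rightarrow> bool" where
  "cert_closed n t \<longleftrightarrow>
     (\<forall>g < code_length (cert_states t). \<forall>i < code_length (inst_machines n).
      \<forall>\<xi> < code_length (inst_edges n). \<forall>u < code_length (inst_trans n i). cert_closed_at n t g i \<xi> u)"

definition cert_letters :: "nat \<Rightarrow> nat \<Rightarrow> bool" where
  "cert_letters n t \<longleftrightarrow> (\<forall>\<xi> < code_length (inst_edges n). \<forall>j < code_length (inst_msgs n \<xi>).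
     cert_letter t (code_nth (inst_msgs n \<xi>) j) < cert_size t)"

definition cert_shapes :: "nat \<Rightarrow> nat \<Rightarrow> bool" where
  "cert_shapes n t \<longleftrightarrow> (\<forall>g < code_length (cert_states t).
     code_length (cert_locals t g) = code_length (inst_machines n) \<and>
     code_length (cert_channels t g) = code_length (inst_edges n) \<and>
     (\<forall>\<xi> < code_length (cert_channels t g). code_nth (cert_channels t g) \<xi> < cert_size t))"

definition cert_initial :: "nat \<Rightarrow> nat \<Rightarrow> bool" where
  "cert_initial n t \<longleftrightarrow> (\<exists>g < code_length (cert_states t).
     (\<forall>j < code_length (inst_machines n). code_nth (cert_locals t g) j = inst_init n j) \<and>
     (\<forall>\<xi> < code_length (inst_edges n). code_nth (cert_channels t g) \<xi> = cert_unit t))"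

definition cert_safe :: "nat \<Rightarrow> nat \<Rightarrow> bool" where
  "cert_safe n t \<longleftrightarrow> (\<forall>g < code_length (cert_states t).
     code_nth (cert_locals t g) (inst_head n (inst_beta n)) = inst_state n \<longrightarrow>
     (\<forall>m < cert_size t. cert_mult t (cert_letter t (inst_msg n)) m \<noteq>
        code_nth (cert_channels t g) (inst_beta n)))"

definition no_cert :: "nat \<Rightarrow> nat \<Rightarrow> bool" where
  "no_cert n t \<longleftrightarrow> nat_monoid (cert_size t) (cert_unit t) (cert_mult t) \<and> cert_letters n t \<and>
     cert_shapes n t \<and> cert_initial n t \<and> cert_closed n t \<and> cert_safe n t"

lemma mem_cert_abstraction:
  "(S, M) \<in> cert_abstraction t \<longleftrightarrow>
    (\<exists>g < code_length (cert_states t).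
       list_decode (cert_locals t g) = S \<and> list_decode (cert_channels t g) = M)"
  by (auto simp: cert_abstraction_def)

context instance_code
begin

lemma cert_closed_at_iff:
  assumes g: "g < code_length (cert_states t)" and i: "i < length (machines P)"
    and \<xi>: "\<xi> < length (edges P)" and u: "u < length (trans_list P i)"
    and tr: "trans_list P i ! u = (p', s, a, q)"
    and shape: "code_length (cert_locals t g) = length (machines P)"
      "code_length (cert_channels t g) = length (edges P)"
  defines "S \<equiv> list_decode (cert_locals t g)" and "M \<equiv> list_decode (cert_channels t g)"
  shows "cert_closed_at n t g i \<xi> u \<longleftrightarrow>
    (p' = S ! i \<and> a \<in> msgs P \<xi> \<longrightarrow>
      (s \<and> tl_e P \<xi> = i \<longrightarrow>
         (S[i := q], M[\<xi> := cert_mult t (M ! \<xi>) (cert_letter t a)]) \<in> cert_abstraction t) \<and>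
      (\<not> s \<and> hd_e P \<xi> = i \<longrightarrow> (\<forall>m < cert_size t. cert_mult t (cert_letter t a) m = M ! \<xi> \<longrightarrow>
         (S[i := q], M[\<xi> := m]) \<in> cert_abstraction t)))"
  using i \<xi> shape inst_trans_field[OF i u tr] unfolding cert_closed_at_def S_def M_def
  by (simp add: code_nth_eq_nth code_length_def code_mem_iff code_update_iff mem_cert_abstraction) blast

lemma cert_closed_iff:
  assumes shapes: "\<forall>g < code_length (cert_states t).
      code_length (cert_locals t g) = length (machines P) \<and>
      code_length (cert_channels t g) = length (edges P)"
  shows "cert_closed n t \<longleftrightarrow>
    abstraction_closed P (cert_size t) (cert_mult t) (cert_letter t) (cert_abstraction t)"
proof
  assume closed: "cert_closed n t"
  have "p' = S ! i \<and> a \<in> msgs P \<xi> \<longrightarrow>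
      (s \<and> tl_e P \<xi> = i \<longrightarrow>
         (S[i := q], M[\<xi> := cert_mult t (M ! \<xi>) (cert_letter t a)]) \<in> cert_abstraction t) \<and>
      (\<not> s \<and> hd_e P \<xi> = i \<longrightarrow> (\<forall>m < cert_size t. cert_mult t (cert_letter t a) m = M ! \<xi> \<longrightarrow>
         (S[i := q], M[\<xi> := m]) \<in> cert_abstraction t))"
    if mem: "(S, M) \<in> cert_abstraction t" and i: "i < length (machines P)"
      and \<xi>: "\<xi> < length (edges P)" and tr: "(p', s, a, q) \<in> trans P i" for S M i \<xi> p' s a q
  proof -
    obtain g where g: "g < code_length (cert_states t)" "S = list_decode (cert_locals t g)"
      "M = list_decode (cert_channels t g)"
      using mem unfolding cert_abstraction_def by blast
    obtain u where u: "u < length (trans_list P i)" "trans_list P i ! u = (p', s, a, q)"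
      using tr unfolding trans_eq_set_trans_list in_set_conv_nth by blast
    have "cert_closed_at n t g i \<xi> u" using closed g(1) i \<xi> u(1) unfolding cert_closed_def by simp
    then show ?thesis using cert_closed_at_iff[OF g(1) i \<xi> u] shapes g by simp
  qed
  then show "abstraction_closed P (cert_size t) (cert_mult t) (cert_letter t) (cert_abstraction t)"
    unfolding abstraction_closed_def by fast
next
  assume sem: "abstraction_closed P (cert_size t) (cert_mult t) (cert_letter t) (cert_abstraction t)"
  have "cert_closed_at n t g i \<xi> u"
    if g: "g < code_length (cert_states t)" and i: "i < length (machines P)"
      and \<xi>: "\<xi> < length (edges P)" and u: "u < length (trans_list P i)" for g i \<xi> u
  proof -
    obtain p' s a q where tr: "trans_list P i ! u = (p', s, a, q)" by (metis prod_cases4)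
    have "(p', s, a, q) \<in> trans P i"
      unfolding trans_eq_set_trans_list tr[symmetric] using u by (rule nth_mem)
    moreover have "(list_decode (cert_locals t g), list_decode (cert_channels t g))
        \<in> cert_abstraction t"
      using g by (auto simp: mem_cert_abstraction)
    ultimately show ?thesis
      using sem i \<xi> cert_closed_at_iff[OF g i \<xi> u tr] shapes g unfolding abstraction_closed_def
      by fastforce
  qed
  then show "cert_closed n t" unfolding cert_closed_def by simp
qed

lemma cert_letters_iff:
  "cert_letters n t \<longleftrightarrow> (\<forall>\<xi> < length (edges P). \<forall>a \<in> msgs P \<xi>. cert_letter t a < cert_size t)"
proof -
  have "(\<forall>j < code_length (inst_msgs n \<xi>). cert_letter t (code_nth (inst_msgs n \<xi>) j) < cert_size t) \<longleftrightarrow>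
      (\<forall>a \<in> msgs P \<xi>. cert_letter t a < cert_size t)" if "\<xi> < length (edges P)" for \<xi>
    using that all_less_code_length_iff[of _ "\<lambda>a. cert_letter t a < cert_size t"] by simp
  then show ?thesis unfolding cert_letters_def inst_simps by blast
qed

lemma cert_shapes_iff:
  "cert_shapes n t \<longleftrightarrow> (\<forall>(S, M) \<in> cert_abstraction t.
     length S = length (machines P) \<and> length M = length (edges P) \<and> set M \<subseteq> {..<cert_size t})"
  unfolding cert_shapes_def inst_simps cert_abstraction_def
    all_less_code_length_iff[of _ "\<lambda>a. a < cert_size t"]
  by (auto simp: code_length_def)

lemma cert_shapes_lengths:
  assumes "cert_shapes n t" "g < code_length (cert_states t)"
  shows "length (list_decode (cert_locals t g)) = length (machines P)"
    "length (list_decode (cert_channels t g)) = length (edges P)"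
proof -
  have "code_length (cert_locals t g) = length (machines P)"
    "code_length (cert_channels t g) = length (edges P)"
    using assms unfolding cert_shapes_def inst_simps by simp_all
  then show "length (list_decode (cert_locals t g)) = length (machines P)"
    "length (list_decode (cert_channels t g)) = length (edges P)"
    by (simp_all add: code_length_def)
qed

lemma cert_initial_iff:
  assumes shapes: "cert_shapes n t"
  shows "cert_initial n t \<longleftrightarrow>
    (map (init P) [0..<length (machines P)], replicate (length (edges P)) (cert_unit t))
      \<in> cert_abstraction t"
proof -
  have "(\<forall>j < length (machines P). code_nth (cert_locals t g) j = inst_init n j) \<longleftrightarrow>
      list_decode (cert_locals t g) = map (init P) [0..<length (machines P)]"
    "(\<forall>\<xi> < length (edges P). code_nth (cert_channels t g) \<xi> = cert_unit t) \<longleftrightarrow>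
      list_decode (cert_channels t g) = replicate (length (edges P)) (cert_unit t)"
    if "g < code_length (cert_states t)" for g
    using cert_shapes_lengths[OF shapes that]
    by (auto simp: code_nth_eq_nth intro: nth_equalityI)
  then show ?thesis unfolding cert_initial_def inst_simps mem_cert_abstraction by blast
qed

lemma cert_safe_iff:
  assumes wf: "wf_protocol P" and \<beta>: "\<beta> < length (edges P)" and shapes: "cert_shapes n t"
  shows "cert_safe n t \<longleftrightarrow> (\<forall>(S, M) \<in> cert_abstraction t.
    S ! hd_e P \<beta> = p \<longrightarrow> (\<forall>m < cert_size t. cert_mult t (cert_letter t b) m \<noteq> M ! \<beta>))"
proof -
  have "hd_e P \<beta> < length (machines P)" using wf \<beta> by (simp add: wf_protocol_def)
  then have "code_nth (cert_locals t g) (hd_e P \<beta>) = list_decode (cert_locals t g) ! hd_e P \<beta> \<and>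
      code_nth (cert_channels t g) \<beta> = list_decode (cert_channels t g) ! \<beta>"
    if "g < code_length (cert_states t)" for g
    using cert_shapes_lengths[OF shapes that] \<beta> by (simp add: code_nth_eq_nth)
  then show ?thesis using \<beta> unfolding cert_safe_def cert_abstraction_def by auto
qed

lemma no_cert_iff:
  assumes wf: "wf_protocol P" and \<beta>: "\<beta> < length (edges P)"
  shows "no_cert n t \<longleftrightarrow> arrival_refutation P \<beta> b p
    (cert_size t) (cert_unit t) (cert_mult t) (cert_letter t) (cert_abstraction t)"
proof (cases "cert_shapes n t")
  case True
  then have lengths: "\<forall>g < code_length (cert_states t).
      code_length (cert_locals t g) = length (machines P) \<and>
      code_length (cert_channels t g) = length (edges P)"
    unfolding cert_shapes_def by simp
  show ?thesis
    unfolding no_cert_def arrival_refutation_def cert_letters_iff cert_initial_iff[OF True]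
      cert_closed_iff[OF lengths] cert_safe_iff[OF wf \<beta> True] cert_shapes_iff[symmetric] ..
next
  case False
  then have "\<not> no_cert n t" "\<not> arrival_refutation P \<beta> b p
      (cert_size t) (cert_unit t) (cert_mult t) (cert_letter t) (cert_abstraction t)"
    unfolding no_cert_def arrival_refutation_def cert_shapes_iff by simp_all
  then show ?thesis by blast
qed

lemma no_cert_sound:
  assumes "wf_protocol P" "\<beta> < length (edges P)" "no_cert n t"
  shows "\<not> can_arrive P \<beta> b p"
  using arrival_refutation_sound no_cert_iff[OF assms(1,2)] assms(2,3) by blast

lemma no_cert_complete:
  assumes wf: "wf_protocol P" and rcp: "recognizable_channel_property P"
    and \<beta>: "\<beta> < length (edges P)" and b: "b \<in> msgs P \<beta>" and no_arrival: "\<not> can_arrive P \<beta> b p"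
  shows "\<exists>t. no_cert n t"
proof -
  obtain k e mult \<phi> G where "finite G" and ref: "arrival_refutation P \<beta> b p k e mult \<phi> G"
    by (rule arrival_refutation_exists[OF wf rcp \<beta> no_arrival])
  obtain Gs where Gs: "set Gs = G" using finite_list[OF \<open>finite G\<close>] by blast
  have "finite (\<Union>\<xi> < length (edges P). msgs P \<xi>)" by (simp add: msgs_def)
  then obtain B where "\<forall>a \<in> (\<Union>\<xi> < length (edges P). msgs P \<xi>). a < B"
    unfolding finite_nat_set_iff_bounded by (elim exE)
  then have B: "a < B" if "\<xi> < length (edges P)" "a \<in> msgs P \<xi>" for \<xi> a using that by blast
  define t where "t = list_encode [k, e,
    list_encode (map (\<lambda>x. list_encode (map (mult x) [0..<k])) [0..<k]),
    list_encode (map \<phi> [0..<B]),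
    list_encode (map (\<lambda>(S, M). list_encode [list_encode S, list_encode M]) Gs)]"
  have "cert_size t = k" "cert_unit t = e" by (simp_all add: t_def cert_accessor_defs)
  moreover have "cert_mult t x y = mult x y" if "x < k" "y < k" for x y
    using that by (simp add: t_def cert_accessor_defs nth_default_nth)
  moreover have "cert_letter t a = \<phi> a" if "\<xi> < length (edges P)" "a \<in> msgs P \<xi>" for \<xi> a
    using B[OF that] by (simp add: t_def cert_accessor_defs nth_default_nth)
  moreover have "cert_abstraction t = G"
  proof -
    have "code_length (cert_states t) = length Gs" by (simp add: t_def cert_accessor_defs)
    moreover have "(list_decode (cert_locals t g), list_decode (cert_channels t g)) = Gs ! g"
      if "g < length Gs" for g
      using that by (simp add: t_def cert_accessor_defs nth_default_nth split: prod.split)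
    ultimately have "cert_abstraction t = (!) Gs ` {..<length Gs}"
      unfolding cert_abstraction_def by (intro image_cong) simp_all
    also have "\<dots> = G" unfolding Gs[symmetric] by (metis atLeast_upt image_set map_nth)
    finally show ?thesis .
  qed
  ultimately have "arrival_refutation P \<beta> b p
      (cert_size t) (cert_unit t) (cert_mult t) (cert_letter t) (cert_abstraction t)"
    using arrival_refutation_transfer[OF ref _ _ \<beta> b] by simp
  then show ?thesis unfolding no_cert_iff[OF wf \<beta>, symmetric] by blast
qed

end

section \<open>Decidability\<close>

lemma prim_rec_yes_cert: "prim_rec_pred (\<lambda>xs. yes_cert (nth_default 0 xs 1) (nth_default 0 xs 0))"
  unfolding yes_cert_def init_code_def step_code_def step_code_at_def arrival_code_def code_mem_def
    code_update_def code_snoc_def locals_code_def channels_code_def inst_accessor_defs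
  by (intro prim_rec_intros)

lemma prim_rec_no_cert: "prim_rec_pred (\<lambda>xs. no_cert (nth_default 0 xs 1) (nth_default 0 xs 0))"
  unfolding no_cert_def nat_monoid_def cert_letters_def cert_shapes_def cert_initial_def cert_closed_def
    cert_closed_at_def cert_safe_def code_mem_def code_update_def cert_accessor_defs inst_accessor_defs
  by (intro prim_rec_intros)

lemma inj_enc_edge: "inj enc_edge"
  by (rule injI) (auto simp: enc_edge_def list_encode_eq split: prod.splits)

lemma inj_enc_trans: "inj enc_trans"
  by (rule injI) (auto simp: enc_trans_def list_encode_eq split: prod.splits if_splits)

lemma inj_enc_machine: "inj enc_machine"
  by (rule injI) (auto simp: enc_machine_def list_encode_eq inj_map_eq_map[OF inj_enc_trans]
      split: prod.splits)

lemma enc_instance_eq_iff: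
  "enc_instance P \<beta> b p = enc_instance P' \<beta>' b' p' \<longleftrightarrow> P = P' \<and> \<beta> = \<beta>' \<and> b = b' \<and> p = p'"
  by (auto simp: enc_instance_def enc_protocol_def list_encode_eq edges_def machines_def prod_eq_iff
      inj_map_eq_map[OF inj_enc_edge] inj_map_eq_map[OF inj_enc_machine])

theorem corollary9p10:
  shows "decidable_on
           (\<lambda>n. \<exists>P \<beta> b p. n = enc_instance P \<beta> b p \<and> valid_instance P \<beta> b p \<and>
                          recognizable_channel_property P)
           (\<lambda>n. \<exists>P \<beta> b p. n = enc_instance P \<beta> b p \<and> can_arrive P \<beta> b p)"
proof (rule decidable_on_by_certificate_search[OF prim_rec_yes_cert prim_rec_no_cert])
  fix n
  assume "\<exists>P \<beta> b p. n = enc_instance P \<beta> b p \<and> valid_instance P \<beta> b p \<and> recognizable_channel_property P"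
  then obtain P \<beta> b p where n: "n = enc_instance P \<beta> b p" and valid: "valid_instance P \<beta> b p"
    and rcp: "recognizable_channel_property P" by blast
  interpret instance_code P \<beta> b p n by standard (rule n)
  have wf: "wf_protocol P" and \<beta>: "\<beta> < length (edges P)" and b: "b \<in> msgs P \<beta>"
    using valid unfolding valid_instance_def by simp_all
  have answer: "(\<exists>P \<beta> b p. n = enc_instance P \<beta> b p \<and> can_arrive P \<beta> b p) \<longleftrightarrow> can_arrive P \<beta> b p"
    using n enc_instance_eq_iff by metis
  show "\<exists>t. yes_cert n t \<or> no_cert n t"
    using yes_cert_complete[OF wf \<beta>] no_cert_complete[OF wf rcp \<beta> b] by blast
  show "\<exists>P \<beta> b p. n = enc_instance P \<beta> b p \<and> can_arrive P \<beta> b p" if "yes_cert n t" for t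
    using answer yes_cert_sound[OF wf \<beta> that] by blast
  show "\<not> (\<exists>P \<beta> b p. n = enc_instance P \<beta> b p \<and> can_arrive P \<beta> b p)" if "no_cert n t" for t
    using answer no_cert_sound[OF wf \<beta> that] by blast
qed

end
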